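(* Let $w=\{w_k\}_{k\ge1}$ be a nondecreasing sequence with $w_1\ge0$, and let $\gamma_1=w_1$, $\gamma_k=w_k-w_{k-1}$ ($k\ge2$), $\gamma=\{\gamma_k\}$. If $f\in H^2$, $\theta$ is an inner function, and $\{g_n\}$ is an orthonormal basis in $K_\theta$, then $$\|f\theta\|_w^2=\|f\|_w^2+\sum_n\|zfg_n\|_\gamma^2$$ as an identity in $[0,\infty]$.
   Context: $H^2$ is the Hardy space on the unit disk (boundary functions on $\mathbb T$). Inner function: $\theta\in H^\infty$ with $|\theta|=1$ a.e. on $\mathbb T$; $K_\theta=H^2\ominus\theta H^2$. For a nonnegative sequence $v=\{v_k\}_{k\ge1}$ and an analytic function $h$ on the disk with Taylor coefficients $\widehat h(k)$, $\|h\|_v:=\big(\sum_{k\ge1}v_k|\widehat h(k)|^2\big)^{1/2}\in[0,\infty]$. *)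

theory Defs
  imports "HOL-Analysis.Analysis"
begin

text \<open>Functions on the unit disk are represented as functions complex => complex;
only their values on the open unit disk matter.\<close>

definition taylor_coeff :: "(complex \<Rightarrow> complex) \<Rightarrow> nat \<Rightarrow> complex" where
  "taylor_coeff h k = (deriv ^^ k) h 0 / of_nat (fact k)"

definition H2 :: "(complex \<Rightarrow> complex) set" where
  "H2 = {f. f holomorphic_on ball 0 1 \<and> summable (\<lambda>k. (cmod (taylor_coeff f k))\<^sup>2)}"

definition H2_inner :: "(complex \<Rightarrow> complex) \<Rightarrow> (complex \<Rightarrow> complex) \<Rightarrow> complex" where
  "H2_inner f g = (\<Sum>k. taylor_coeff f k * cnj (taylor_coeff g k))"

definition Hinf :: "(complex \<Rightarrow> complex) set" where
  "Hinf = {f. f holomorphic_on ball 0 1 \<and> (\<exists>B. \<forall>z\<in>ball 0 1. cmod (f z) \<le> B)}"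

definition inner_function :: "(complex \<Rightarrow> complex) \<Rightarrow> bool" where
  "inner_function \<theta> \<longleftrightarrow> \<theta> \<in> Hinf \<and>
     (AE t in lebesgue_on {0..2*pi}. \<exists>L. ((\<lambda>r::real. \<theta> (complex_of_real r * cis t)) \<longlongrightarrow> L) (at_left 1)
                                         \<and> cmod L = 1)"

definition model_space :: "(complex \<Rightarrow> complex) \<Rightarrow> (complex \<Rightarrow> complex) set" where
  "model_space \<theta> = {g \<in> H2. \<forall>h\<in>H2. H2_inner g (\<lambda>z. \<theta> z * h z) = 0}"

definition orthonormal_basis_of :: "(complex \<Rightarrow> complex) set \<Rightarrow> 'i set \<Rightarrow> ('i \<Rightarrow> complex \<Rightarrow> complex) \<Rightarrow> bool" where
  "orthonormal_basis_of K I g \<longleftrightarrow>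
     (\<forall>n\<in>I. g n \<in> K) \<and>
     (\<forall>n\<in>I. \<forall>m\<in>I. H2_inner (g n) (g m) = (if n = m then 1 else 0)) \<and>
     (\<forall>h\<in>K. (\<forall>n\<in>I. H2_inner h (g n) = 0) \<longrightarrow> (\<forall>k. taylor_coeff h k = 0))"

definition wnorm_sq :: "(nat \<Rightarrow> real) \<Rightarrow> (complex \<Rightarrow> complex) \<Rightarrow> ennreal" where
  "wnorm_sq v h = (\<Sum>k. ennreal (v (Suc k) * (cmod (taylor_coeff h (Suc k)))\<^sup>2))"

end

theory Submission
  imports Defs "HOL-Complex_Analysis.Complex_Analysis" "HOL-Real_Asymp.Real_Asymp"
begin

text \<open>
  Write a and c for the Taylor coefficients of f and \<open>\<theta>\<close>. Since \<open>|\<theta>| = 1\<close> a.e. on the circle,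
  the Fourier coefficients of \<open>|\<theta>|\<^sup>2\<close> are those of the constant 1, i.e. the shifts of c are
  orthonormal, and multiplication by \<open>\<theta>\<close> is an isometry of \<open>H\<^sup>2\<close>. For fixed m, the coefficient of
  \<open>z\<^sup>m\<close> in \<open>f g\<^sub>n\<close> is the inner product of \<open>g\<^sub>n\<close> with a fixed finitely supported vector; replacing
  that vector by its projection onto \<open>K\<^sub>\<theta>\<close> and applying Parseval's identity to the basis gives
  \<open>\<Sum>\<^sub>n |(f g\<^sub>n)\<^sup>^(m)|\<^sup>2 = \<Sum>\<^sub>k\<^sub>\<le>\<^sub>m |a\<^sub>k|\<^sup>2 - \<Sum>\<^sub>k\<^sub>\<le>\<^sub>m |(f\<theta>)\<^sup>^(k)|\<^sup>2\<close>.
  Summation by parts writes each weighted norm as a combination of the tails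
  \<open>\<Sum>\<^sub>k\<^sub>>\<^sub>j |\<cdot>|\<^sup>2\<close> with the nonnegative weights \<open>\<gamma>\<^sub>j\<close>; as \<open>\<parallel>f\<theta>\<parallel> = \<parallel>f\<parallel>\<close>, each tail of \<open>f\<theta>\<close> is
  the corresponding tail of f plus the quantity above, and summing over j gives the identity.
\<close>

section \<open>Square-summable sequences\<close>

definition l2 :: "(nat \<Rightarrow> complex) set" where
  "l2 = {a. summable (\<lambda>k. (cmod (a k))\<^sup>2)}"

definition l2_inner :: "(nat \<Rightarrow> complex) \<Rightarrow> (nat \<Rightarrow> complex) \<Rightarrow> complex" where
  "l2_inner a b = (\<Sum>k. a k * cnj (b k))"

definition l2_normsq :: "(nat \<Rightarrow> complex) \<Rightarrow> real" where
  "l2_normsq a = (\<Sum>k. (cmod (a k))\<^sup>2)"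

lemma l2_normsq_nonneg: "a \<in> l2 \<Longrightarrow> l2_normsq a \<ge> 0"
  unfolding l2_normsq_def l2_def by (intro suminf_nonneg) auto

lemma summable_norm_mult_l2:
  assumes "a \<in> l2" "b \<in> l2"
  shows "summable (\<lambda>k. cmod (a k) * cmod (b k))"
proof (rule summable_comparison_test')
  show "summable (\<lambda>k. (cmod (a k))\<^sup>2 + (cmod (b k))\<^sup>2)"
    using assms unfolding l2_def by (intro summable_add) auto
  show "norm (cmod (a k) * cmod (b k)) \<le> (cmod (a k))\<^sup>2 + (cmod (b k))\<^sup>2" for k
  proof -
    have "2 * (cmod (a k) * cmod (b k)) \<le> (cmod (a k))\<^sup>2 + (cmod (b k))\<^sup>2"
      using sum_squares_bound[of "cmod (a k)" "cmod (b k)"] by (simp add: mult.assoc)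
    moreover have "norm (cmod (a k) * cmod (b k)) = cmod (a k) * cmod (b k)" "0 \<le> cmod (a k) * cmod (b k)"
      by simp_all
    ultimately show ?thesis by linarith
  qed
qed

lemma summable_l2_inner:
  assumes "a \<in> l2" "b \<in> l2"
  shows "summable (\<lambda>k. a k * cnj (b k))"
  by (rule summable_norm_cancel, rule summable_comparison_test'[OF summable_norm_mult_l2[OF assms]])
     (simp add: norm_mult)

lemma l2_add: "a \<in> l2 \<Longrightarrow> b \<in> l2 \<Longrightarrow> (\<lambda>k. a k + b k) \<in> l2"
  unfolding l2_def
proof safe
  assume a: "summable (\<lambda>k. (cmod (a k))\<^sup>2)" and b: "summable (\<lambda>k. (cmod (b k))\<^sup>2)"
  show "summable (\<lambda>k. (cmod (a k + b k))\<^sup>2)"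
  proof (rule summable_comparison_test')
    show "summable (\<lambda>k. 2 * (cmod (a k))\<^sup>2 + 2 * (cmod (b k))\<^sup>2)"
      using a b by (intro summable_add summable_mult)
    fix k
    have "(cmod (a k + b k))\<^sup>2 \<le> (cmod (a k) + cmod (b k))\<^sup>2"
      by (intro power_mono norm_triangle_ineq) auto
    also have "\<dots> \<le> 2 * (cmod (a k))\<^sup>2 + 2 * (cmod (b k))\<^sup>2"
      using sum_squares_bound[of "cmod (a k)" "cmod (b k)"] by (simp add: power2_sum)
    finally show "norm ((cmod (a k + b k))\<^sup>2) \<le> 2 * (cmod (a k))\<^sup>2 + 2 * (cmod (b k))\<^sup>2"
      by simp
  qed
qed

lemma l2_cmult: "a \<in> l2 \<Longrightarrow> (\<lambda>k. c * a k) \<in> l2"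
  unfolding l2_def by (simp add: norm_mult power_mult_distrib summable_mult)

lemma l2_diff: "a \<in> l2 \<Longrightarrow> b \<in> l2 \<Longrightarrow> (\<lambda>k. a k - b k) \<in> l2"
  using l2_add[of a "\<lambda>k. - 1 * b k"] l2_cmult[of b "- 1"] by simp

lemma l2_finite_support: "(\<And>k. k \<ge> N \<Longrightarrow> a k = 0) \<Longrightarrow> a \<in> l2"
  unfolding l2_def by (intro CollectI summable_finite[of "{..<N}"]) (simp_all add: not_less)

lemma l2_sum: "finite F \<Longrightarrow> (\<And>n. n \<in> F \<Longrightarrow> x n \<in> l2) \<Longrightarrow> (\<lambda>k. \<Sum>n\<in>F. x n k) \<in> l2"
  by (induction F rule: finite_induct) (auto intro: l2_add l2_finite_support[of 0])

lemma l2_normsq_sums: "a \<in> l2 \<Longrightarrow> (\<lambda>k. (cmod (a k))\<^sup>2) sums l2_normsq a"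
  unfolding l2_def l2_normsq_def by (simp add: summable_sums)

lemma l2_inner_finite_support:
  assumes "\<And>k. k \<ge> N \<Longrightarrow> a k = 0 \<or> b k = 0"
  shows "l2_inner a b = (\<Sum>k<N. a k * cnj (b k))"
  unfolding l2_inner_def by (rule suminf_finite) (use assms in auto)

lemma l2_normsq_finite_support:
  assumes "\<And>k. k \<ge> N \<Longrightarrow> a k = 0"
  shows "l2_normsq a = (\<Sum>k<N. (cmod (a k))\<^sup>2)"
  unfolding l2_normsq_def by (rule suminf_finite) (use assms in auto)

lemma l2_inner_self:
  assumes "a \<in> l2"
  shows "l2_inner a a = of_real (l2_normsq a)"
proof -
  have "a k * cnj (a k) = of_real ((cmod (a k))\<^sup>2)" for k
    by (rule complex_norm_square[symmetric])
  then show ?thesis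
    using suminf_of_real[of "\<lambda>k. (cmod (a k))\<^sup>2", where 'a=complex] assms
    unfolding l2_inner_def l2_normsq_def l2_def by simp
qed

lemma l2_inner_add_left:
  "a \<in> l2 \<Longrightarrow> b \<in> l2 \<Longrightarrow> c \<in> l2 \<Longrightarrow> l2_inner (\<lambda>k. a k + b k) c = l2_inner a c + l2_inner b c"
  unfolding l2_inner_def by (simp add: distrib_right suminf_add summable_l2_inner)

lemma l2_inner_diff_left:
  "a \<in> l2 \<Longrightarrow> b \<in> l2 \<Longrightarrow> c \<in> l2 \<Longrightarrow> l2_inner (\<lambda>k. a k - b k) c = l2_inner a c - l2_inner b c"
  unfolding l2_inner_def by (simp add: left_diff_distrib suminf_diff summable_l2_inner)

lemma l2_inner_cmult_left: "a \<in> l2 \<Longrightarrow> c \<in> l2 \<Longrightarrow> l2_inner (\<lambda>k. s * a k) c = s * l2_inner a c"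
  unfolding l2_inner_def by (simp add: mult.assoc suminf_mult summable_l2_inner)

lemma l2_inner_cmult_right: "a \<in> l2 \<Longrightarrow> c \<in> l2 \<Longrightarrow> l2_inner a (\<lambda>k. s * c k) = cnj s * l2_inner a c"
  unfolding l2_inner_def by (simp add: mult.left_commute suminf_mult summable_l2_inner)

lemma l2_inner_sum_left:
  assumes "finite F" "\<And>n. n \<in> F \<Longrightarrow> x n \<in> l2" "c \<in> l2"
  shows "l2_inner (\<lambda>k. \<Sum>n\<in>F. x n k) c = (\<Sum>n\<in>F. l2_inner (x n) c)"
  using assms
proof (induction F rule: finite_induct)
  case empty
  then show ?case by (simp add: l2_inner_def)
next
  case (insert n F)
  then have "l2_inner (\<lambda>k. x n k + (\<Sum>n\<in>F. x n k)) c = l2_inner (x n) c + l2_inner (\<lambda>k. \<Sum>n\<in>F. x n k) c"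
    by (intro l2_inner_add_left l2_sum) auto
  with insert show ?case by simp
qed

lemma suminf_cnj: "summable f \<Longrightarrow> cnj (suminf f) = (\<Sum>k. cnj (f k))"
  by (simp add: sums_cnj summable_sums sums_unique)

lemma l2_inner_commute: "a \<in> l2 \<Longrightarrow> b \<in> l2 \<Longrightarrow> l2_inner b a = cnj (l2_inner a b)"
  unfolding l2_inner_def by (simp add: suminf_cnj summable_l2_inner mult.commute)

lemma l2_normsq_diff:
  assumes a: "a \<in> l2" and b: "b \<in> l2"
  shows "l2_normsq (\<lambda>k. a k - b k) = l2_normsq a + l2_normsq b - 2 * Re (l2_inner a b)"
proof -
  have sa: "summable (\<lambda>k. (cmod (a k))\<^sup>2)" and sb: "summable (\<lambda>k. (cmod (b k))\<^sup>2)"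
    using assms unfolding l2_def by auto
  have sab: "summable (\<lambda>k. 2 * Re (a k * cnj (b k)))"
    using summable_Re[OF summable_l2_inner[OF assms]] by (rule summable_mult)
  have "(cmod (a k - b k))\<^sup>2 = (cmod (a k))\<^sup>2 + (cmod (b k))\<^sup>2 - 2 * Re (a k * cnj (b k))" for k
    unfolding cmod_power2 by (simp add: power2_eq_square algebra_simps)
  then have "l2_normsq (\<lambda>k. a k - b k)
             = (\<Sum>k. (cmod (a k))\<^sup>2 + (cmod (b k))\<^sup>2 - 2 * Re (a k * cnj (b k)))"
    unfolding l2_normsq_def by simp
  also have "\<dots> = (\<Sum>k. (cmod (a k))\<^sup>2 + (cmod (b k))\<^sup>2) - (\<Sum>k. 2 * Re (a k * cnj (b k)))"
    by (rule suminf_diff[symmetric]) (use sa sb sab in \<open>auto intro: summable_add\<close>)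
  also have "(\<Sum>k. (cmod (a k))\<^sup>2 + (cmod (b k))\<^sup>2) = l2_normsq a + l2_normsq b"
    unfolding l2_normsq_def by (rule suminf_add[OF sa sb, symmetric])
  also have "(\<Sum>k. 2 * Re (a k * cnj (b k))) = 2 * Re (l2_inner a b)"
    unfolding l2_inner_def
    using bounded_linear.suminf[OF bounded_linear_Re summable_l2_inner[OF assms]]
          suminf_mult[OF summable_Re[OF summable_l2_inner[OF assms]], of 2] by simp
  finally show ?thesis .
qed

lemma l2_normsq_le:
  assumes "\<And>n. (\<Sum>k<n. (cmod (a k))\<^sup>2) \<le> e"
  shows "a \<in> l2" "l2_normsq a \<le> e"
proof -
  have "summable (\<lambda>k. (cmod (a k))\<^sup>2)" by (rule summableI_nonneg_bounded[OF _ assms]) simp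
  then show "a \<in> l2" "l2_normsq a \<le> e"
    unfolding l2_normsq_def l2_def by (simp_all add: suminf_le_const assms)
qed

lemma sum_le_l2_normsq: "a \<in> l2 \<Longrightarrow> finite F \<Longrightarrow> (\<Sum>k\<in>F. (cmod (a k))\<^sup>2) \<le> l2_normsq a"
  unfolding l2_def l2_normsq_def by (rule sum_le_suminf) auto

lemma norm_le_l2_normsq: "a \<in> l2 \<Longrightarrow> (cmod (a k))\<^sup>2 \<le> l2_normsq a"
  using sum_le_l2_normsq[of a "{k}"] by simp

lemma l2_Cauchy_Schwarz:
  assumes "a \<in> l2" "b \<in> l2"
  shows "cmod (l2_inner a b) \<le> sqrt (l2_normsq a) * sqrt (l2_normsq b)"
proof -
  have s: "summable (\<lambda>k. cmod (a k) * cmod (b k))" by (rule summable_norm_mult_l2[OF assms])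
  have "cmod (l2_inner a b) \<le> (\<Sum>k. cmod (a k) * cmod (b k))"
    unfolding l2_inner_def using summable_norm[of "\<lambda>k. a k * cnj (b k)"] s by (simp add: norm_mult)
  also have "\<dots> \<le> sqrt (l2_normsq a) * sqrt (l2_normsq b)"
  proof (rule suminf_le_const[OF s])
    fix n
    have "(\<Sum>k<n. cmod (a k) * cmod (b k))
          \<le> L2_set (\<lambda>k. cmod (a k)) {..<n} * L2_set (\<lambda>k. cmod (b k)) {..<n}"
      using L2_set_mult_ineq[of "\<lambda>k. cmod (a k)" "\<lambda>k. cmod (b k)" "{..<n}"] by simp
    also have "\<dots> \<le> sqrt (l2_normsq a) * sqrt (l2_normsq b)"
      unfolding L2_set_def
      by (intro mult_mono real_sqrt_le_mono sum_le_l2_normsq assms real_sqrt_ge_zero sum_nonneg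
          l2_normsq_nonneg) auto
    finally show "(\<Sum>k<n. cmod (a k) * cmod (b k)) \<le> sqrt (l2_normsq a) * sqrt (l2_normsq b)" .
  qed
  finally show ?thesis .
qed

lemma tendsto_l2_inner_left:
  assumes "\<And>N. x N \<in> l2" "z \<in> l2" "g \<in> l2"
    and lim: "(\<lambda>N. l2_normsq (\<lambda>k. x N k - z k)) \<longlonglongrightarrow> 0"
  shows "(\<lambda>N. l2_inner (x N) g) \<longlonglongrightarrow> l2_inner z g"
proof -
  have bound: "norm (l2_inner (x N) g - l2_inner z g)
                 \<le> sqrt (l2_normsq (\<lambda>k. x N k - z k)) * sqrt (l2_normsq g)" for N
    using l2_Cauchy_Schwarz[OF l2_diff[OF assms(1,2)] assms(3)]
    by (simp add: l2_inner_diff_left assms)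
  have "(\<lambda>N. sqrt (l2_normsq (\<lambda>k. x N k - z k)) * sqrt (l2_normsq g)) \<longlonglongrightarrow> sqrt 0 * sqrt (l2_normsq g)"
    by (intro tendsto_intros lim)
  then have "(\<lambda>N. sqrt (l2_normsq (\<lambda>k. x N k - z k)) * sqrt (l2_normsq g)) \<longlonglongrightarrow> 0"
    by simp
  then have "(\<lambda>N. l2_inner (x N) g - l2_inner z g) \<longlonglongrightarrow> 0"
    by (rule Lim_null_comparison[OF always_eventually, rotated]) (use bound in auto)
  then show ?thesis by (simp add: LIM_zero_iff)
qed

lemma tendsto_l2_normsq:
  assumes x: "\<And>N. x N \<in> l2" and z: "z \<in> l2"
    and lim: "(\<lambda>N. l2_normsq (\<lambda>k. x N k - z k)) \<longlonglongrightarrow> 0"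
  shows "(\<lambda>N. l2_normsq (x N)) \<longlonglongrightarrow> l2_normsq z"
proof -
  have "l2_normsq (x N) = l2_normsq (\<lambda>k. x N k - z k) - l2_normsq z + 2 * Re (l2_inner (x N) z)" for N
    using l2_normsq_diff[OF x z] by simp
  moreover have "(\<lambda>N. l2_normsq (\<lambda>k. x N k - z k) - l2_normsq z + 2 * Re (l2_inner (x N) z))
                 \<longlonglongrightarrow> 0 - l2_normsq z + 2 * Re (l2_inner z z)"
    by (intro tendsto_intros lim tendsto_l2_inner_left x z)
  ultimately show ?thesis by (simp add: l2_inner_self z)
qed

lemma l2_normsq_le_coordinatewise_limit:
  assumes lim: "\<And>k. (\<lambda>N. y N k) \<longlonglongrightarrow> z k"
    and bound: "\<And>N. N \<ge> M \<Longrightarrow> y N \<in> l2 \<and> l2_normsq (y N) \<le> e"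
  shows "z \<in> l2" "l2_normsq z \<le> e"
proof -
  have "(\<Sum>k<n. (cmod (z k))\<^sup>2) \<le> e" for n
  proof (rule LIMSEQ_le_const2)
    show "(\<lambda>N. \<Sum>k<n. (cmod (y N k))\<^sup>2) \<longlonglongrightarrow> (\<Sum>k<n. (cmod (z k))\<^sup>2)"
      by (intro tendsto_intros lim)
    have "(\<Sum>k<n. (cmod (y N k))\<^sup>2) \<le> e" if "N \<ge> M" for N
      using sum_le_l2_normsq[of "y N" "{..<n}"] bound[OF that] by auto
    then show "\<exists>N0. \<forall>N\<ge>N0. (\<Sum>k<n. (cmod (y N k))\<^sup>2) \<le> e" by blast
  qed
  then show "z \<in> l2" "l2_normsq z \<le> e" by (auto intro: l2_normsq_le)
qed

lemma Cauchy_l2_coordinate: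
  assumes x: "\<And>N. x N \<in> l2"
    and Cauchy: "\<And>e. e > 0 \<Longrightarrow> \<exists>M. \<forall>N\<ge>M. \<forall>N'\<ge>M. l2_normsq (\<lambda>k. x N k - x N' k) < e"
  shows "Cauchy (\<lambda>N. x N k)"
proof (rule metric_CauchyI)
  fix e :: real assume "e > 0"
  then obtain M where M: "\<forall>N\<ge>M. \<forall>N'\<ge>M. l2_normsq (\<lambda>k. x N k - x N' k) < e\<^sup>2"
    using Cauchy[of "e\<^sup>2"] by auto
  have "dist (x m k) (x n k) < e" if "m \<ge> M" "n \<ge> M" for m n
  proof -
    have "(cmod (x m k - x n k))\<^sup>2 \<le> l2_normsq (\<lambda>k. x m k - x n k)"
      by (rule norm_le_l2_normsq[OF l2_diff[OF x x]])
    also have "\<dots> < e\<^sup>2" using M that by blast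
    finally have "(cmod (x m k - x n k))\<^sup>2 < e\<^sup>2" .
    then show ?thesis using \<open>e > 0\<close> by (simp add: dist_norm power_less_imp_less_base)
  qed
  then show "\<exists>M. \<forall>m\<ge>M. \<forall>n\<ge>M. dist (x m k) (x n k) < e" by blast
qed

lemma l2_complete:
  assumes x: "\<And>N. x N \<in> l2"
    and Cauchy: "\<And>e. e > 0 \<Longrightarrow> \<exists>M. \<forall>N\<ge>M. \<forall>N'\<ge>M. l2_normsq (\<lambda>k. x N k - x N' k) < e"
  obtains z where "z \<in> l2" "(\<lambda>N. l2_normsq (\<lambda>k. x N k - z k)) \<longlonglongrightarrow> 0"
proof -
  have "Cauchy (\<lambda>N. x N k)" for k
    by (rule Cauchy_l2_coordinate[OF x Cauchy])
  then have "(\<lambda>N. x N k) \<longlonglongrightarrow> lim (\<lambda>N. x N k)" for k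
    by (simp add: Cauchy_convergent_iff convergent_LIMSEQ_iff)
  then obtain z where z: "\<And>k. (\<lambda>N. x N k) \<longlonglongrightarrow> z k"
    by (rule that[of "\<lambda>k. lim (\<lambda>N. x N k)"])
  have close: "(\<lambda>k. x N k - z k) \<in> l2 \<and> l2_normsq (\<lambda>k. x N k - z k) \<le> e"
    if M: "\<forall>N\<ge>M. \<forall>N'\<ge>M. l2_normsq (\<lambda>k. x N k - x N' k) < e" and "N \<ge> M" for e M N
  proof -
    have "(\<lambda>N'. x N k - x N' k) \<longlonglongrightarrow> x N k - z k" for k
      by (intro tendsto_diff tendsto_const z)
    moreover have "(\<lambda>k. x N k - x N' k) \<in> l2 \<and> l2_normsq (\<lambda>k. x N k - x N' k) \<le> e" if "N' \<ge> M" for N'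
      using M \<open>N \<ge> M\<close> that l2_diff[OF x x] by (simp add: less_imp_le)
    ultimately show ?thesis
      using l2_normsq_le_coordinatewise_limit[of "\<lambda>N' k. x N k - x N' k" "\<lambda>k. x N k - z k" M e] by blast
  qed
  obtain M1 where "\<forall>N\<ge>M1. \<forall>N'\<ge>M1. l2_normsq (\<lambda>k. x N k - x N' k) < 1"
    using Cauchy[of 1] by auto
  then have "(\<lambda>k. x M1 k - z k) \<in> l2" using close[of M1 1 M1] by blast
  from l2_diff[OF x[of M1] this] have "z \<in> l2" by simp
  moreover have "(\<lambda>N. l2_normsq (\<lambda>k. x N k - z k)) \<longlonglongrightarrow> 0"
  proof (rule LIMSEQ_I)
    fix e :: real assume "e > 0"
    then obtain M where M: "\<forall>N\<ge>M. \<forall>N'\<ge>M. l2_normsq (\<lambda>k. x N k - x N' k) < e/2"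
      using Cauchy[of "e/2"] by auto
    have "norm (l2_normsq (\<lambda>k. x N k - z k) - 0) < e" if "N \<ge> M" for N
      using close[OF M that] l2_normsq_nonneg[of "\<lambda>k. x N k - z k"] \<open>e > 0\<close> by simp
    then show "\<exists>M. \<forall>N\<ge>M. norm (l2_normsq (\<lambda>k. x N k - z k) - 0) < e" by blast
  qed
  ultimately show ?thesis by (rule that)
qed

locale l2_orthonormal =
  fixes I :: "'i set" and G :: "'i \<Rightarrow> nat \<Rightarrow> complex"
  assumes l2_member: "\<And>n. n \<in> I \<Longrightarrow> G n \<in> l2"
    and orthonormal: "\<And>n m. n \<in> I \<Longrightarrow> m \<in> I \<Longrightarrow> l2_inner (G n) (G m) = (if n = m then 1 else 0)"
begin

lemma l2_combination: "finite D \<Longrightarrow> D \<subseteq> I \<Longrightarrow> (\<lambda>k. \<Sum>n\<in>D. b n * G n k) \<in> l2"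
  by (intro l2_sum l2_cmult l2_member) auto

lemma l2_inner_combination_member:
  assumes "finite D" "D \<subseteq> I" "m \<in> I"
  shows "l2_inner (\<lambda>k. \<Sum>n\<in>D. b n * G n k) (G m) = (if m \<in> D then b m else 0)"
proof -
  have "l2_inner (\<lambda>k. \<Sum>n\<in>D. b n * G n k) (G m) = (\<Sum>n\<in>D. l2_inner (\<lambda>k. b n * G n k) (G m))"
    using assms by (intro l2_inner_sum_left l2_cmult l2_member) auto
  also have "\<dots> = (\<Sum>n\<in>D. b n * (if n = m then 1 else 0))"
    using assms by (intro sum.cong refl) (auto simp: l2_inner_cmult_left l2_member orthonormal)
  finally show ?thesis using assms by (simp add: if_distrib cong: if_cong)
qed

lemma l2_inner_combinations:
  assumes D: "finite D" "D \<subseteq> I"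
  shows "l2_inner (\<lambda>k. \<Sum>n\<in>D. a n * G n k) (\<lambda>k. \<Sum>n\<in>D. b n * G n k) = (\<Sum>n\<in>D. a n * cnj (b n))"
proof -
  let ?B = "\<lambda>k. \<Sum>n\<in>D. b n * G n k"
  have "l2_inner (\<lambda>k. \<Sum>n\<in>D. a n * G n k) ?B = (\<Sum>n\<in>D. l2_inner (\<lambda>k. a n * G n k) ?B)"
    using D by (intro l2_inner_sum_left l2_cmult l2_member l2_combination) auto
  also have "\<dots> = (\<Sum>n\<in>D. a n * cnj (b n))"
  proof (intro sum.cong refl)
    fix n assume "n \<in> D"
    then have "l2_inner (G n) ?B = cnj (b n)"
      using l2_inner_commute[OF l2_combination[OF D] l2_member, of n b]
            l2_inner_combination_member[OF D, of n b] D by auto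
    then show "l2_inner (\<lambda>k. a n * G n k) ?B = a n * cnj (b n)"
      using \<open>n \<in> D\<close> D by (subst l2_inner_cmult_left) (auto intro: l2_member l2_combination)
  qed
  finally show ?thesis .
qed

lemma l2_normsq_combination:
  assumes "finite D" "D \<subseteq> I"
  shows "l2_normsq (\<lambda>k. \<Sum>n\<in>D. b n * G n k) = (\<Sum>n\<in>D. (cmod (b n))\<^sup>2)"
proof -
  have "complex_of_real (l2_normsq (\<lambda>k. \<Sum>n\<in>D. b n * G n k))
        = l2_inner (\<lambda>k. \<Sum>n\<in>D. b n * G n k) (\<lambda>k. \<Sum>n\<in>D. b n * G n k)"
    by (rule l2_inner_self[symmetric, OF l2_combination[OF assms]])
  also have "\<dots> = complex_of_real (\<Sum>n\<in>D. (cmod (b n))\<^sup>2)"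
    unfolding l2_inner_combinations[OF assms] by (simp only: of_real_sum complex_norm_square)
  finally show ?thesis by (simp only: of_real_eq_iff)
qed

end

definition seq_conv :: "(nat \<Rightarrow> complex) \<Rightarrow> (nat \<Rightarrow> complex) \<Rightarrow> nat \<Rightarrow> complex" where
  "seq_conv a b n = (\<Sum>i=0..n. a i * b (n - i))"

lemma seq_conv_eq_fps_nth: "seq_conv a b = fps_nth (Abs_fps a * Abs_fps b)"
  by (simp add: seq_conv_def fps_mult_nth fun_eq_iff)

lemma seq_conv_commute: "seq_conv a b = seq_conv b a"
  unfolding seq_conv_eq_fps_nth by (simp add: mult.commute)

lemma seq_conv_left_commute: "seq_conv a (seq_conv b c) = seq_conv b (seq_conv a c)"
  unfolding seq_conv_eq_fps_nth by (simp add: mult.left_commute fps_nth_inverse)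

lemma taylor_coeff_mult:
  assumes "f holomorphic_on ball 0 1" "g holomorphic_on ball 0 1"
  shows "taylor_coeff (\<lambda>z. f z * g z) = seq_conv (taylor_coeff f) (taylor_coeff g)"
proof
  fix n
  have "taylor_coeff (\<lambda>z. f z * g z) n =
     (\<Sum>i = 0..n. of_nat (n choose i) * (deriv ^^ i) f 0 * (deriv ^^ (n-i)) g 0 / of_nat (fact n))"
    unfolding taylor_coeff_def by (subst higher_deriv_mult[OF assms]) (auto simp: sum_divide_distrib)
  also have "\<dots> = seq_conv (taylor_coeff f) (taylor_coeff g) n"
    unfolding seq_conv_def taylor_coeff_def
    by (intro sum.cong refl) (simp add: binomial_fact field_simps)
  finally show "taylor_coeff (\<lambda>z. f z * g z) n = seq_conv (taylor_coeff f) (taylor_coeff g) n" .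
qed

definition fun_of_coeffs :: "(nat \<Rightarrow> complex) \<Rightarrow> complex \<Rightarrow> complex" where
  "fun_of_coeffs a = eval_fps (Abs_fps a)"

lemma fps_conv_radius_bounded_coeffs:
  assumes "\<And>k. cmod (a k) \<le> B"
  shows "fps_conv_radius (Abs_fps a) \<ge> 1"
  unfolding fps_conv_radius_def
proof (rule conv_radius_geI_ex)
  fix r :: real assume r: "0 < r" "ereal r < 1"
  have "summable (\<lambda>n. Abs_fps a $ n * complex_of_real r ^ n)"
  proof (rule summable_comparison_test')
    show "summable (\<lambda>n. B * r ^ n)" using r by (intro summable_mult summable_geometric) auto
    show "norm (Abs_fps a $ n * complex_of_real r ^ n) \<le> B * r ^ n" for n
      using assms[of n] r by (simp add: norm_mult norm_power mult_right_mono)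
  qed
  then show "\<exists>z. norm z = r \<and> summable (\<lambda>n. Abs_fps a $ n * z ^ n)"
    using r by (intro exI[of _ "complex_of_real r"]) auto
qed

lemma
  assumes "\<And>k. cmod (a k) \<le> B"
  shows holomorphic_fun_of_coeffs: "fun_of_coeffs a holomorphic_on ball 0 1"
    and taylor_coeff_fun_of_coeffs: "taylor_coeff (fun_of_coeffs a) = a"
proof -
  have r: "ereal (cmod z) < fps_conv_radius (Abs_fps a)" if "cmod z < 1" for z
    using that by (intro order.strict_trans2[OF _ fps_conv_radius_bounded_coeffs[of a B, OF assms]]) simp
  show "fun_of_coeffs a holomorphic_on ball 0 1"
    unfolding fun_of_coeffs_def by (rule holomorphic_on_eval_fps) (auto intro: r)
  have "eval_fps (Abs_fps a) has_fps_expansion Abs_fps a"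
    by (rule eval_fps_has_fps_expansion) (use r[of 0] zero_ereal_def in simp)
  from fps_nth_fps_expansion[OF this] show "taylor_coeff (fun_of_coeffs a) = a"
    unfolding fun_of_coeffs_def taylor_coeff_def by auto
qed

lemma taylor_coeff_H2: "f \<in> H2 \<Longrightarrow> taylor_coeff f \<in> l2"
  unfolding H2_def l2_def by auto

lemma holomorphic_H2: "f \<in> H2 \<Longrightarrow> f holomorphic_on ball 0 1"
  unfolding H2_def by auto

lemma H2_inner_eq_l2_inner: "H2_inner f g = l2_inner (taylor_coeff f) (taylor_coeff g)"
  unfolding H2_inner_def l2_inner_def ..

lemma
  assumes "a \<in> l2"
  shows fun_of_coeffs_H2: "fun_of_coeffs a \<in> H2"
    and taylor_coeff_fun_of_coeffs_l2: "taylor_coeff (fun_of_coeffs a) = a"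
proof -
  have "cmod (a k) \<le> sqrt (l2_normsq a)" for k
    using norm_le_l2_normsq[OF assms, of k] real_le_rsqrt by blast
  from holomorphic_fun_of_coeffs[OF this] taylor_coeff_fun_of_coeffs[OF this]
  show "taylor_coeff (fun_of_coeffs a) = a" "fun_of_coeffs a \<in> H2"
    using assms by (auto simp: H2_def l2_def)
qed

lemma taylor_coeff_times_z:
  assumes "h holomorphic_on ball 0 1"
  shows "taylor_coeff (\<lambda>z. z * h z) (Suc k) = taylor_coeff h k"
proof -
  have "Abs_fps (\<lambda>n. if n = 1 then 1 else 0) = (fps_X :: complex fps)"
    unfolding fps_X_def by simp
  then have id: "(\<lambda>z. z) = fun_of_coeffs (\<lambda>n. if n = 1 then 1 else 0)"
    by (simp add: fun_of_coeffs_def fun_eq_iff)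
  have X: "taylor_coeff (\<lambda>z. z) = (\<lambda>n. if n = 1 then 1 else 0)"
    unfolding id by (rule taylor_coeff_fun_of_coeffs[of _ 1]) simp
  have "taylor_coeff (\<lambda>z. z * h z) (Suc k) = seq_conv (taylor_coeff (\<lambda>z. z)) (taylor_coeff h) (Suc k)"
    using taylor_coeff_mult[of "\<lambda>z. z" h] assms by simp
  also have "\<dots> = (\<Sum>i\<in>{1}. taylor_coeff h (Suc k - i))"
    unfolding seq_conv_def X by (rule sum.mono_neutral_cong_right) auto
  finally show ?thesis by simp
qed

section \<open>Fourier coefficients on the circle\<close>

abbreviation angle_measure :: "real measure" where
  "angle_measure \<equiv> lebesgue_on {0..2*pi}"

lemma
  fixes f :: "real \<Rightarrow> 'a::euclidean_space"
  assumes "continuous_on {0..2*pi} f"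
  shows integrable_continuous_angles: "integrable angle_measure f"
    and integral_continuous_angles: "integral\<^sup>L angle_measure f = integral {0..2*pi} f"
proof -
  show i: "integrable angle_measure f" by (rule continuous_imp_integrable_real[OF assms])
  have "(f has_integral integral\<^sup>L angle_measure f) {0..2*pi}"
    by (rule has_integral_integral_lebesgue_on[OF i]) simp
  then show "integral\<^sup>L angle_measure f = integral {0..2*pi} f" by (simp add: integral_unique)
qed

lemma integral_const_angles: "integral\<^sup>L angle_measure (\<lambda>t. c) = (2 * pi) *\<^sub>R (c :: 'a::euclidean_space)"
proof -
  have "integral\<^sup>L angle_measure (\<lambda>t. c) = integral {0..2*pi} (\<lambda>t. c)"
    by (rule integral_continuous_angles) simp
  then show ?thesis by simp
qed

lemma measure_angle_measure [simp]: "measure angle_measure {0..2*pi} = 2 * pi"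
  using integral_const_angles[of "1::real"] by simp

lemma integral_cis_angles:
  "integral\<^sup>L angle_measure (\<lambda>t. cis (of_int j * t)) = (if j = 0 then 2 * pi else 0)"
proof (cases "j = 0")
  case True
  then show ?thesis using integral_const_angles[of "1::complex"] by (simp add: scaleR_conv_of_real)
next
  case False
  have "((\<lambda>t. cis (of_int j * t) / (of_int j * \<i>)) has_vector_derivative cis (of_int j * t))
          (at t within {0..2*pi})" for t
    unfolding has_vector_derivative_def using False
    by (auto intro!: derivative_eq_intros simp: fun_eq_iff scaleR_conv_of_real field_simps)
  then have "((\<lambda>t. cis (of_int j * t)) has_integral
               cis (of_int j * (2*pi)) / (of_int j * \<i>) - cis (of_int j * 0) / (of_int j * \<i>)) {0..2*pi}"
    by (intro fundamental_theorem_of_calculus) auto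
  moreover have "cis (of_int j * (2*pi)) = 1"
    using cis_multiple_2pi[of "of_int j"] by (simp add: mult.commute)
  moreover have "integral\<^sup>L angle_measure (\<lambda>t. cis (of_int j * t)) = integral {0..2*pi} (\<lambda>t. cis (of_int j * t))"
    by (rule integral_continuous_angles) (intro continuous_intros)
  ultimately show ?thesis using False by (simp add: integral_unique)
qed

lemma integral_fourier_series_cis:
  fixes a :: "nat \<Rightarrow> complex"
  assumes a: "summable (\<lambda>k. norm (a k))"
  shows "integral\<^sup>L angle_measure (\<lambda>t. (\<Sum>k. a k * cis (real k * t)) * cis (of_int j * t))
         = 2 * pi * (if j \<le> 0 then a (nat (- j)) else 0)"
proof -
  define f where "f k t = a k * cis (of_int (int k + j) * t)" for k t
  have "(\<Sum>k. a k * cis (real k * t)) * cis (of_int j * t) = (\<Sum>k. f k t)" for t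
  proof -
    have "summable (\<lambda>k. a k * cis (real k * t))"
      by (rule summable_norm_cancel) (use a in \<open>simp add: norm_mult\<close>)
    then show ?thesis
      unfolding f_def by (simp add: suminf_mult2 mult.assoc cis_mult distrib_right)
  qed
  moreover have "integral\<^sup>L angle_measure (\<lambda>t. \<Sum>k. f k t) = (\<Sum>k. integral\<^sup>L angle_measure (f k))"
  proof (rule integral_suminf)
    show "integrable angle_measure (f k)" for k
      unfolding f_def by (rule integrable_continuous_angles) (intro continuous_intros)
  qed (use a in \<open>simp_all add: f_def norm_mult integral_const_angles summable_mult\<close>)
  moreover have "(\<lambda>k. integral\<^sup>L angle_measure (f k)) = (\<lambda>k. if int k = - j then 2 * pi * a k else 0)"
  proof
    fix k
    have "integral\<^sup>L angle_measure (f k) = a k * integral\<^sup>L angle_measure (\<lambda>t. cis (of_int (int k + j) * t))"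
      unfolding f_def by (rule integral_mult_right_zero)
    then show "integral\<^sup>L angle_measure (f k) = (if int k = - j then 2 * pi * a k else 0)"
      using integral_cis_angles[of "int k + j"] by auto
  qed
  moreover have "(\<Sum>k. if int k = - j then 2 * pi * a k else 0) = 2 * pi * (if j \<le> 0 then a (nat (- j)) else 0)"
  proof (cases "j \<le> 0")
    case True
    then have "(\<lambda>k. if int k = - j then 2 * pi * a k else 0) = (\<lambda>k. if k = nat (- j) then 2 * pi * a k else 0)"
      by (auto simp: fun_eq_iff)
    then show ?thesis using True sums_single[of "nat (- j)" "\<lambda>k. 2 * pi * a k"] by (simp add: sums_iff)
  qed auto
  ultimately show ?thesis by simp
qed

lemma sums_integral_angles:
  fixes f :: "nat \<Rightarrow> real \<Rightarrow> complex"
  assumes cont: "\<And>l. continuous_on {0..2*pi} (f l)"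
    and bound: "\<And>l t. norm (f l t) \<le> b l" and b: "summable b"
  shows "(\<lambda>l. integral\<^sup>L angle_measure (f l)) sums integral\<^sup>L angle_measure (\<lambda>t. \<Sum>l. f l t)"
proof -
  have int: "integrable angle_measure (f l)" for l by (rule integrable_continuous_angles[OF cont])
  have summable: "AE t in angle_measure. summable (\<lambda>l. norm (f l t))"
  proof (rule AE_I2)
    show "summable (\<lambda>l. norm (f l t))" for t
      by (rule summable_comparison_test'[OF b]) (simp add: bound)
  qed
  have int_summable: "summable (\<lambda>l. LINT t|angle_measure. norm (f l t))"
  proof (rule summable_comparison_test')
    show "summable (\<lambda>l. 2 * pi * b l)" using b by (rule summable_mult)
    have "(LINT t|angle_measure. norm (f l t)) \<le> (LINT t|angle_measure. b l)" for l
      by (intro integral_mono integrable_norm int bound) (simp add: integrable_continuous_angles)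
    then show "norm (LINT t|angle_measure. norm (f l t)) \<le> 2 * pi * b l" for l
      by (simp add: integral_nonneg)
  qed
  show ?thesis
    using summable_integral[OF int summable int_summable] integral_suminf[OF int summable int_summable]
    by (simp add: summable_sums)
qed

lemma norm_fourier_series_le:
  assumes "summable (\<lambda>k. norm (a k))" "(\<lambda>k. a k * cis (real k * t)) sums T"
  shows "norm T \<le> (\<Sum>k. norm (a k))"
  using summable_norm[of "\<lambda>k. a k * cis (real k * t)"] assms by (simp add: sums_iff norm_mult)

lemma sums_cnj_coeff_fourier:
  assumes "(\<lambda>k. a k * cis (real k * t)) sums T"
  shows "(\<lambda>l. cnj (a l) * (T * cis (of_int (int d - int l) * t))) sums (T * cnj T * cis (of_int (int d) * t))"
proof -
  have eq: "(T * cis (of_int (int d) * t)) * cnj (a l * cis (real l * t))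
            = cnj (a l) * (T * cis (of_int (int d - int l) * t))" for l
    by (simp add: cis_cnj cis_mult algebra_simps)
  have "(\<lambda>l. (T * cis (of_int (int d) * t)) * cnj (a l * cis (real l * t)))
          sums ((T * cis (of_int (int d) * t)) * cnj T)"
    using assms by (intro sums_mult) (simp only: sums_cnj)
  then show ?thesis unfolding eq by (simp only: mult_ac)
qed

lemma integral_norm_sq_fourier_series:
  fixes a :: "nat \<Rightarrow> complex" and T :: "real \<Rightarrow> complex"
  assumes a: "summable (\<lambda>k. norm (a k))"
    and T: "\<And>t. (\<lambda>k. a k * cis (real k * t)) sums T t"
    and T_cont: "continuous_on {0..2*pi} T"
  shows "integral\<^sup>L angle_measure (\<lambda>t. of_real ((cmod (T t))\<^sup>2) * cis (of_int (int d) * t))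
         = 2 * pi * (\<Sum>k. a k * cnj (a (k + d)))"
proof -
  define B where "B = (\<Sum>k. norm (a k))"
  have a_le: "norm (a k) \<le> B" for k
    unfolding B_def using sum_le_suminf[OF a, of "{k}"] by simp
  define f where "f l t = cnj (a l) * (T t * cis (of_int (int d - int l) * t))" for l t
  have f_sums: "(\<lambda>l. f l t) sums (T t * cnj (T t) * cis (of_int (int d) * t))" for t
    unfolding f_def by (rule sums_cnj_coeff_fourier[OF T])
  have "integral\<^sup>L angle_measure (\<lambda>t. \<Sum>l. f l t)
        = integral\<^sup>L angle_measure (\<lambda>t. of_real ((cmod (T t))\<^sup>2) * cis (of_int (int d) * t))"
    by (intro Bochner_Integration.integral_cong refl) (metis complex_norm_square f_sums sums_unique)
  moreover have "(\<lambda>l. integral\<^sup>L angle_measure (f l)) sums integral\<^sup>L angle_measure (\<lambda>t. \<Sum>l. f l t)"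
    by (rule sums_integral_angles[of _ "\<lambda>l. norm (a l) * B"])
       (use norm_fourier_series_le[OF a T] a in \<open>auto simp: f_def norm_mult B_def mult_left_mono
                            intro!: continuous_intros T_cont summable_mult2\<close>)
  moreover have "integral\<^sup>L angle_measure (f l) = (if l < d then 0 else 2 * pi * (a (l - d) * cnj (a l)))" for l
  proof -
    have "integral\<^sup>L angle_measure (f l) = cnj (a l) *
            integral\<^sup>L angle_measure (\<lambda>t. (\<Sum>k. a k * cis (real k * t)) * cis (of_int (int d - int l) * t))"
      unfolding f_def using T by (simp add: sums_iff)
    also have "\<dots> = (if l < d then 0 else 2 * pi * (a (l - d) * cnj (a l)))"
      by (subst integral_fourier_series_cis[OF a]) (auto simp: nat_diff_distrib mult.commute)
    finally show ?thesis .
  qed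
  ultimately have "(\<lambda>k. 2 * pi * (a k * cnj (a (k + d))))
                   sums integral\<^sup>L angle_measure (\<lambda>t. of_real ((cmod (T t))\<^sup>2) * cis (of_int (int d) * t))"
    by (subst (asm) sums_zero_iff_shift[of d, symmetric]) auto
  moreover have "summable (\<lambda>k. a k * cnj (a (k + d)))"
  proof (rule summable_norm_cancel, rule summable_comparison_test')
    show "summable (\<lambda>k. norm (a k) * B)" using a by (rule summable_mult2)
    show "norm (norm (a k * cnj (a (k + d)))) \<le> norm (a k) * B" for k
      using a_le[of "k + d"] by (simp add: norm_mult mult_left_mono)
  qed
  then have "(\<lambda>k. 2 * pi * (a k * cnj (a (k + d)))) sums (2 * pi * (\<Sum>k. a k * cnj (a (k + d))))"
    by (intro sums_mult summable_sums)
  ultimately show ?thesis using sums_unique2 by blast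
qed

lemma circle_point_in_ball: "0 \<le> r \<Longrightarrow> r < 1 \<Longrightarrow> complex_of_real r * cis t \<in> ball 0 1"
  by (simp add: norm_mult)

lemma continuous_on_circle:
  assumes "f holomorphic_on ball 0 1" "0 \<le> r" "r < 1"
  shows "continuous_on A (\<lambda>t. f (complex_of_real r * cis t))"
  by (rule continuous_on_compose2[OF holomorphic_on_imp_continuous_on[OF assms(1)]])
     (use circle_point_in_ball[OF assms(2,3)] in \<open>auto intro!: continuous_intros\<close>)

lemma sums_taylor_circle:
  assumes "f holomorphic_on ball 0 1" "0 \<le> r" "r < 1"
  shows "(\<lambda>k. (taylor_coeff f k * complex_of_real r ^ k) * cis (real k * t)) sums f (complex_of_real r * cis t)"
proof -
  have "(\<lambda>k. (deriv ^^ k) f 0 / fact k * (complex_of_real r * cis t - 0) ^ k) sums f (complex_of_real r * cis t)"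
    by (rule holomorphic_power_series[OF assms(1) circle_point_in_ball[OF assms(2,3)]])
  moreover have "(complex_of_real r * cis t - 0) ^ k = complex_of_real r ^ k * cis (real k * t)" for k
    by (simp only: power_mult_distrib Complex.DeMoivre diff_zero)
  ultimately show ?thesis by (simp add: taylor_coeff_def mult_ac)
qed

definition radius_seq :: "nat \<Rightarrow> real" where
  "radius_seq m = 1 - 1 / (real m + 2)"

lemma
  shows radius_seq_nonneg: "0 \<le> radius_seq m"
    and radius_seq_less_one: "radius_seq m < 1"
    and radius_seq_tendsto: "radius_seq \<longlonglongrightarrow> 1"
    and radius_seq_at_left: "filterlim radius_seq (at_left 1) sequentially"
proof -
  show "0 \<le> radius_seq m" "radius_seq m < 1" unfolding radius_seq_def by (auto simp: field_simps)
  show l: "radius_seq \<longlonglongrightarrow> 1" unfolding radius_seq_def by real_asymp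
  show "filterlim radius_seq (at_left 1) sequentially"
    by (rule tendsto_imp_filterlim_at_left[OF l]) (auto simp: radius_seq_def field_simps)
qed

lemma norm_taylor_coeff_le:
  assumes hol: "f holomorphic_on ball 0 1" and bound: "\<And>z. z \<in> ball 0 1 \<Longrightarrow> cmod (f z) \<le> B"
  shows "cmod (taylor_coeff f k) \<le> B"
proof (rule LIMSEQ_le_const2)
  show "(\<lambda>m. cmod (taylor_coeff f k) * radius_seq m ^ k) \<longlonglongrightarrow> cmod (taylor_coeff f k)"
    using tendsto_mult_left[OF tendsto_power[OF radius_seq_tendsto, of k], of "cmod (taylor_coeff f k)"]
    by simp
  have le: "cmod (taylor_coeff f k) * s ^ k \<le> B" if s: "0 < s" "s < 1" for s
  proof -
    have "norm ((deriv ^^ k) f 0) \<le> fact k * B / s ^ k"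
    proof (rule Cauchy_inequality)
      show "f holomorphic_on ball 0 s" by (rule holomorphic_on_subset[OF hol]) (use s in auto)
      show "continuous_on (cball 0 s) f"
        by (rule continuous_on_subset[OF holomorphic_on_imp_continuous_on[OF hol]]) (use s in auto)
      show "norm (f x) \<le> B" if "norm (0 - x) = s" for x using that s by (intro bound) auto
    qed (use s in auto)
    then show ?thesis using s unfolding taylor_coeff_def by (simp add: norm_divide field_simps)
  qed
  then show "\<exists>N. \<forall>m\<ge>N. cmod (taylor_coeff f k) * radius_seq m ^ k \<le> B"
    by (intro exI allI impI le) (auto simp: radius_seq_def field_simps)
qed

lemma integral_norm_sq_circle:
  assumes hol: "f holomorphic_on ball 0 1" and bound: "\<And>z. z \<in> ball 0 1 \<Longrightarrow> cmod (f z) \<le> B"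
    and r: "0 \<le> r" "r < 1"
  shows "integral\<^sup>L angle_measure
           (\<lambda>t. of_real ((cmod (f (complex_of_real r * cis t)))\<^sup>2) * cis (of_int (int d) * t))
         = 2 * pi * (\<Sum>k. taylor_coeff f k * cnj (taylor_coeff f (k + d)) * of_real (r ^ k * r ^ (k + d)))"
proof -
  define a where "a k = taylor_coeff f k * complex_of_real r ^ k" for k
  have "summable (\<lambda>k. norm (a k))"
  proof (rule summable_comparison_test')
    show "summable (\<lambda>k. B * r ^ k)" using r by (intro summable_mult summable_geometric) auto
    show "norm (norm (a k)) \<le> B * r ^ k" for k
      unfolding a_def using norm_taylor_coeff_le[OF hol bound, of k] r
      by (simp add: norm_mult norm_power mult_right_mono)
  qed
  from integral_norm_sq_fourier_series[OF this, of "\<lambda>t. f (complex_of_real r * cis t)" d]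
  show ?thesis
    using sums_taylor_circle[OF hol r] continuous_on_circle[OF hol r]
    by (simp add: a_def mult_ac)
qed

lemma
  assumes hol: "f holomorphic_on ball 0 1" and bound: "\<And>z. z \<in> ball 0 1 \<Longrightarrow> cmod (f z) \<le> B"
    and r: "0 \<le> r" "r < 1"
  shows summable_norm_sq_taylor_circle: "summable (\<lambda>k. (cmod (taylor_coeff f k) * r ^ k)\<^sup>2)"
    and suminf_norm_sq_taylor_circle_le: "(\<Sum>k. (cmod (taylor_coeff f k) * r ^ k)\<^sup>2) \<le> B\<^sup>2"
proof -
  define c where "c = taylor_coeff f"
  show sum: "summable (\<lambda>k. (cmod (taylor_coeff f k) * r ^ k)\<^sup>2)"
  proof (rule summable_comparison_test')
    show "summable (\<lambda>k. B\<^sup>2 * (r\<^sup>2) ^ k)"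
      using r by (intro summable_mult summable_geometric) (auto simp: abs_square_less_1)
    fix k
    have "(cmod (taylor_coeff f k) * r ^ k)\<^sup>2 = (cmod (taylor_coeff f k))\<^sup>2 * (r\<^sup>2) ^ k"
      by (simp add: power_mult_distrib power_mult[symmetric] mult.commute)
    also have "\<dots> \<le> B\<^sup>2 * (r\<^sup>2) ^ k"
      by (intro mult_right_mono power_mono norm_taylor_coeff_le[OF hol bound]) auto
    finally show "norm ((cmod (taylor_coeff f k) * r ^ k)\<^sup>2) \<le> B\<^sup>2 * (r\<^sup>2) ^ k" by simp
  qed
  have "c k * cnj (c k) * complex_of_real (r ^ k * r ^ k) = complex_of_real ((cmod (c k) * r ^ k)\<^sup>2)" for k
    by (simp add: complex_norm_square[symmetric] power_mult_distrib power2_eq_square)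
  then have "integral\<^sup>L angle_measure (\<lambda>t. complex_of_real ((cmod (f (complex_of_real r * cis t)))\<^sup>2))
             = complex_of_real (2 * pi * (\<Sum>k. (cmod (c k) * r ^ k)\<^sup>2))"
    using integral_norm_sq_circle[OF hol bound r, of 0] suminf_of_real[OF sum, where 'a=complex]
    by (simp add: c_def)
  then have "complex_of_real (LINT t|angle_measure. (cmod (f (complex_of_real r * cis t)))\<^sup>2)
             = complex_of_real (2 * pi * (\<Sum>k. (cmod (c k) * r ^ k)\<^sup>2))"
    by (simp only: integral_complex_of_real)
  then have "2 * pi * (\<Sum>k. (cmod (c k) * r ^ k)\<^sup>2)
             = (LINT t|angle_measure. (cmod (f (complex_of_real r * cis t)))\<^sup>2)"
    by (simp only: of_real_eq_iff)
  also have "\<dots> \<le> (LINT t|angle_measure. B\<^sup>2)"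
  proof (rule integral_mono)
    show "integrable angle_measure (\<lambda>t. (cmod (f (complex_of_real r * cis t)))\<^sup>2)"
      by (intro integrable_continuous_angles continuous_intros continuous_on_circle[OF hol r])
    show "(cmod (f (complex_of_real r * cis t)))\<^sup>2 \<le> B\<^sup>2" for t
      using bound[OF circle_point_in_ball[OF r]] by (intro power_mono) auto
  qed (simp add: integrable_continuous_angles)
  finally show "(\<Sum>k. (cmod (taylor_coeff f k) * r ^ k)\<^sup>2) \<le> B\<^sup>2" by (simp add: c_def)
qed

lemma Hinf_subset_H2: "Hinf \<subseteq> H2"
proof
  fix f assume "f \<in> Hinf"
  then obtain B where hol: "f holomorphic_on ball 0 1" and bound: "\<And>z. z \<in> ball 0 1 \<Longrightarrow> cmod (f z) \<le> B"
    unfolding Hinf_def by blast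
  have r: "0 \<le> radius_seq m" "radius_seq m < 1" for m by (simp_all add: radius_seq_nonneg radius_seq_less_one)
  have "(\<Sum>k<N. (cmod (taylor_coeff f k))\<^sup>2) \<le> B\<^sup>2" for N
  proof (rule LIMSEQ_le_const2)
    have "(\<lambda>m. \<Sum>k<N. (cmod (taylor_coeff f k) * radius_seq m ^ k)\<^sup>2)
          \<longlonglongrightarrow> (\<Sum>k<N. (cmod (taylor_coeff f k) * 1 ^ k)\<^sup>2)"
      by (intro tendsto_intros radius_seq_tendsto)
    then show "(\<lambda>m. \<Sum>k<N. (cmod (taylor_coeff f k) * radius_seq m ^ k)\<^sup>2)
               \<longlonglongrightarrow> (\<Sum>k<N. (cmod (taylor_coeff f k))\<^sup>2)"
      by simp
    have "(\<Sum>k<N. (cmod (taylor_coeff f k) * radius_seq m ^ k)\<^sup>2) \<le> B\<^sup>2" for m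
      using sum_le_suminf[OF summable_norm_sq_taylor_circle[OF hol bound r[of m]], of "{..<N}"]
            suminf_norm_sq_taylor_circle_le[OF hol bound r[of m]] by simp
    then show "\<exists>N0. \<forall>m\<ge>N0. (\<Sum>k<N. (cmod (taylor_coeff f k) * radius_seq m ^ k)\<^sup>2) \<le> B\<^sup>2" by blast
  qed
  then show "f \<in> H2"
    using l2_normsq_le(1)[of "taylor_coeff f"] hol unfolding H2_def l2_def by blast
qed

lemma tendsto_suminf_dominated:
  fixes x :: "nat \<Rightarrow> complex"
  assumes x: "summable (\<lambda>k. norm (x k))"
    and bound: "\<And>m k. norm (\<rho> m k) \<le> 1" and lim: "\<And>k. (\<lambda>m. \<rho> m k) \<longlonglongrightarrow> 1"
  shows "(\<lambda>m. \<Sum>k. x k * \<rho> m k) \<longlonglongrightarrow> (\<Sum>k. x k)"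
proof -
  let ?M = "count_space (UNIV :: nat set)"
  have w: "integrable ?M (\<lambda>k. norm (x k))" using x by (simp add: integrable_count_space_nat_iff)
  have le: "AE k in ?M. norm (x k * \<rho> m k) \<le> norm (x k)" for m
    using bound by (simp add: norm_mult mult_left_le)
  have conv: "AE k in ?M. (\<lambda>m. x k * \<rho> m k) \<longlonglongrightarrow> x k"
    using tendsto_mult_left[OF lim, of "x _"] by simp
  have "integrable ?M (\<lambda>k. x k * \<rho> m k)" for m
    by (rule integrable_dominated_convergence2[OF _ _ w conv le]) simp_all
  moreover have "integrable ?M x"
    by (rule integrable_dominated_convergence[OF _ _ w conv le]) simp_all
  moreover have "(\<lambda>m. integral\<^sup>L ?M (\<lambda>k. x k * \<rho> m k)) \<longlonglongrightarrow> integral\<^sup>L ?M x"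
    by (rule integral_dominated_convergence[OF _ _ w conv le]) simp_all
  ultimately show ?thesis by (simp add: integral_count_space_nat)
qed

lemma AE_tendsto_norm_sq_radial:
  assumes "inner_function \<theta>"
  shows "AE t in angle_measure. (\<lambda>m. (cmod (\<theta> (complex_of_real (radius_seq m) * cis t)))\<^sup>2) \<longlonglongrightarrow> 1"
proof -
  have "AE t in angle_measure. \<exists>L. ((\<lambda>r::real. \<theta> (complex_of_real r * cis t)) \<longlongrightarrow> L) (at_left 1) \<and> cmod L = 1"
    using assms unfolding inner_function_def by blast
  then show ?thesis
  proof (rule AE_mp, intro AE_I2 impI)
    fix t assume "\<exists>L. ((\<lambda>r::real. \<theta> (complex_of_real r * cis t)) \<longlongrightarrow> L) (at_left 1) \<and> cmod L = 1"
    then obtain L where L: "((\<lambda>r::real. \<theta> (complex_of_real r * cis t)) \<longlongrightarrow> L) (at_left 1)" "cmod L = 1"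
      by blast
    have "(\<lambda>m. \<theta> (complex_of_real (radius_seq m) * cis t)) \<longlonglongrightarrow> L"
      by (rule filterlim_compose[OF L(1) radius_seq_at_left])
    then have "(\<lambda>m. (cmod (\<theta> (complex_of_real (radius_seq m) * cis t)))\<^sup>2) \<longlonglongrightarrow> (cmod L)\<^sup>2"
      by (intro tendsto_intros)
    then show "(\<lambda>m. (cmod (\<theta> (complex_of_real (radius_seq m) * cis t)))\<^sup>2) \<longlonglongrightarrow> 1"
      using L(2) by simp
  qed
qed

lemma tendsto_integral_norm_sq_radial:
  assumes inner: "inner_function \<theta>"
  shows "(\<lambda>m. integral\<^sup>L angle_measure
            (\<lambda>t. of_real ((cmod (\<theta> (complex_of_real (radius_seq m) * cis t)))\<^sup>2) * cis (of_int (int d) * t)))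
         \<longlonglongrightarrow> integral\<^sup>L angle_measure (\<lambda>t. cis (of_int (int d) * t))"
proof -
  obtain B where hol: "\<theta> holomorphic_on ball 0 1" and bound: "\<And>z. z \<in> ball 0 1 \<Longrightarrow> cmod (\<theta> z) \<le> B"
    using inner unfolding inner_function_def Hinf_def by blast
  note r = radius_seq_nonneg radius_seq_less_one
  show ?thesis
  proof (rule integral_dominated_convergence[where w = "\<lambda>t. B\<^sup>2"])
    show "(\<lambda>t. cis (of_int (int d) * t)) \<in> borel_measurable angle_measure"
      by (intro borel_measurable_integrable integrable_continuous_angles continuous_intros)
    show "(\<lambda>t. of_real ((cmod (\<theta> (complex_of_real (radius_seq m) * cis t)))\<^sup>2) * cis (of_int (int d) * t))
            \<in> borel_measurable angle_measure" for m
      by (intro borel_measurable_integrable integrable_continuous_angles continuous_intros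
            continuous_on_circle[OF hol r])
    show "integrable angle_measure (\<lambda>t. B\<^sup>2)" by (simp add: integrable_continuous_angles)
    show "AE t in angle_measure. norm (of_real ((cmod (\<theta> (complex_of_real (radius_seq m) * cis t)))\<^sup>2)
                                      * cis (of_int (int d) * t)) \<le> B\<^sup>2" for m
    proof (rule AE_I2)
      fix t
      have "(cmod (\<theta> (complex_of_real (radius_seq m) * cis t)))\<^sup>2 \<le> B\<^sup>2"
        using bound[OF circle_point_in_ball[OF r]] by (intro power_mono) auto
      then show "norm (of_real ((cmod (\<theta> (complex_of_real (radius_seq m) * cis t)))\<^sup>2)
                       * cis (of_int (int d) * t)) \<le> B\<^sup>2"
        by (simp add: norm_mult norm_power)
    qed
    show "AE t in angle_measure. (\<lambda>m. of_real ((cmod (\<theta> (complex_of_real (radius_seq m) * cis t)))\<^sup>2)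
                                      * cis (of_int (int d) * t)) \<longlonglongrightarrow> cis (of_int (int d) * t)"
      using AE_tendsto_norm_sq_radial[OF inner]
      by eventually_elim (use tendsto_mult_right[OF tendsto_of_real] in fastforce)
  qed
qed

text \<open>Evaluate \<open>\<integral> |\<theta>(r e\<^sup>i\<^sup>t)|\<^sup>2 e\<^sup>i\<^sup>d\<^sup>t dt\<close> by \<open>integral_norm_sq_circle\<close> and let \<open>r \<rightarrow> 1\<close>
  on both sides: the integrand by the unimodular radial limits, the series by dominated convergence.\<close>

lemma inner_function_autocorrelation:
  assumes inner: "inner_function \<theta>"
  shows "(\<Sum>k. taylor_coeff \<theta> k * cnj (taylor_coeff \<theta> (k + d))) = (if d = 0 then 1 else 0)"
proof -
  define c where "c = taylor_coeff \<theta>"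
  obtain B where hol: "\<theta> holomorphic_on ball 0 1" and bound: "\<And>z. z \<in> ball 0 1 \<Longrightarrow> cmod (\<theta> z) \<le> B"
    using inner unfolding inner_function_def Hinf_def by blast
  have "c \<in> l2"
    using Hinf_subset_H2 inner unfolding c_def inner_function_def by (auto intro: taylor_coeff_H2)
  moreover have "(\<lambda>k. c (k + d)) \<in> l2"
    using summable_ignore_initial_segment[of "\<lambda>k. (cmod (c k))\<^sup>2" d] \<open>c \<in> l2\<close>
    unfolding l2_def by simp
  ultimately have "summable (\<lambda>k. norm (c k * cnj (c (k + d))))"
    using summable_norm_mult_l2 by (simp add: norm_mult)
  then have "(\<lambda>m. \<Sum>k. c k * cnj (c (k + d)) * of_real (radius_seq m ^ k * radius_seq m ^ (k + d)))
             \<longlonglongrightarrow> (\<Sum>k. c k * cnj (c (k + d)))"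
  proof (rule tendsto_suminf_dominated)
    show "norm (complex_of_real (radius_seq m ^ k * radius_seq m ^ (k + d))) \<le> 1" for m k
      unfolding norm_of_real using radius_seq_nonneg[of m] radius_seq_less_one[of m]
      by (simp add: abs_mult power_le_one mult_le_one del: of_real_mult of_real_power)
    have "(\<lambda>m. complex_of_real (radius_seq m ^ k * radius_seq m ^ (k + d))) \<longlonglongrightarrow> of_real (1 ^ k * 1 ^ (k + d))" for k
      by (intro tendsto_intros radius_seq_tendsto)
    then show "(\<lambda>m. complex_of_real (radius_seq m ^ k * radius_seq m ^ (k + d))) \<longlonglongrightarrow> 1" for k
      by simp
  qed
  then have "(\<lambda>m. integral\<^sup>L angle_measure
               (\<lambda>t. of_real ((cmod (\<theta> (complex_of_real (radius_seq m) * cis t)))\<^sup>2) * cis (of_int (int d) * t)))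
             \<longlonglongrightarrow> 2 * pi * (\<Sum>k. c k * cnj (c (k + d)))"
    using integral_norm_sq_circle[OF hol bound radius_seq_nonneg radius_seq_less_one]
    unfolding c_def by (simp only:) (intro tendsto_intros)
  with tendsto_integral_norm_sq_radial[OF inner, of d]
  have "2 * pi * (\<Sum>k. c k * cnj (c (k + d))) = integral\<^sup>L angle_measure (\<lambda>t. cis (of_int (int d) * t))"
    using LIMSEQ_unique by blast
  then show ?thesis unfolding c_def integral_cis_angles by (auto split: if_splits)
qed

section \<open>Multiplication by an inner function is an isometry\<close>

definition shift_seq :: "nat \<Rightarrow> (nat \<Rightarrow> complex) \<Rightarrow> nat \<Rightarrow> complex" where
  "shift_seq i c k = (if i \<le> k then c (k - i) else 0)"

definition truncate :: "nat \<Rightarrow> (nat \<Rightarrow> complex) \<Rightarrow> nat \<Rightarrow> complex" where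
  "truncate M a k = (if k < M then a k else 0)"

lemma l2_truncate: "truncate M a \<in> l2"
  by (rule l2_finite_support[of M]) (simp add: truncate_def)

lemma tendsto_l2_normsq_truncate:
  assumes "a \<in> l2"
  shows "(\<lambda>M. l2_normsq (\<lambda>k. truncate M a k - a k)) \<longlonglongrightarrow> 0"
proof -
  have "l2_normsq (\<lambda>k. truncate M a k - a k) = (\<Sum>k. (cmod (a (k + M)))\<^sup>2)" for M
  proof -
    have "(\<lambda>k. (cmod (truncate M a k - a k))\<^sup>2) sums l2_normsq (\<lambda>k. truncate M a k - a k)"
      by (intro l2_normsq_sums l2_diff l2_truncate assms)
    then have "(\<lambda>k. (cmod (truncate M a (k + M) - a (k + M)))\<^sup>2) sums l2_normsq (\<lambda>k. truncate M a k - a k)"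
      by (subst sums_zero_iff_shift) (auto simp: truncate_def)
    then show ?thesis by (simp add: truncate_def sums_iff)
  qed
  moreover have "(\<lambda>M. \<Sum>k. (cmod (a (k + M)))\<^sup>2) \<longlonglongrightarrow> 0"
    using assms unfolding l2_def by (intro suminf_exist_split2) simp
  ultimately show ?thesis by simp
qed

lemma seq_conv_diff: "seq_conv (\<lambda>i. x i - y i) c = (\<lambda>k. seq_conv x c k - seq_conv y c k)"
  unfolding seq_conv_def by (simp add: left_diff_distrib sum_subtractf)

lemma seq_conv_cmult: "seq_conv (\<lambda>i. s * x i) c = (\<lambda>k. s * seq_conv x c k)"
  unfolding seq_conv_def by (simp add: sum_distrib_left mult.assoc)

lemma seq_conv_truncate: "k < M \<Longrightarrow> seq_conv (truncate M a) c k = seq_conv a c k"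
  unfolding seq_conv_def truncate_def by (intro sum.cong) auto

lemma seq_conv_finite_support:
  assumes "\<And>k. k \<ge> N \<Longrightarrow> a k = 0"
  shows "seq_conv a c k = (\<Sum>i<N. a i * shift_seq i c k)"
proof -
  have "seq_conv a c k = (\<Sum>i\<in>{0..k} \<inter> {..<N}. a i * c (k - i))"
    unfolding seq_conv_def by (rule sum.mono_neutral_right) (use assms not_less in auto)
  also have "\<dots> = (\<Sum>i<N. a i * shift_seq i c k)"
    by (rule sum.mono_neutral_cong_left) (auto simp: shift_seq_def)
  finally show ?thesis .
qed

definition reflect :: "nat \<Rightarrow> (nat \<Rightarrow> complex) \<Rightarrow> nat \<Rightarrow> complex" where
  "reflect m a k = (if k \<le> m then cnj (a (m - k)) else 0)"

lemma l2_reflect: "reflect m a \<in> l2"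
  by (rule l2_finite_support[of "Suc m"]) (simp add: reflect_def)

lemma l2_inner_reflect: "l2_inner (reflect m a) x = cnj (seq_conv a x m)"
proof -
  have "l2_inner (reflect m a) x = (\<Sum>k<Suc m. reflect m a k * cnj (x k))"
    by (rule l2_inner_finite_support) (simp add: reflect_def)
  also have "\<dots> = cnj (seq_conv x a m)"
    by (simp add: reflect_def seq_conv_def lessThan_Suc_atMost atLeast0AtMost mult.commute)
  finally show ?thesis by (simp add: seq_conv_commute)
qed

lemma l2_inner_reflect_seq_conv: "l2_inner (reflect m a) (seq_conv h c) = l2_inner (reflect m (seq_conv a c)) h"
  unfolding l2_inner_reflect seq_conv_left_commute[of a h c] seq_conv_commute[of h "seq_conv a c"] ..

lemma l2_normsq_reflect: "l2_normsq (reflect m a) = (\<Sum>k\<le>m. (cmod (a k))\<^sup>2)"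
proof -
  have "l2_normsq (reflect m a) = (\<Sum>k=0..m. (cmod (a (m - k)))\<^sup>2)"
    by (subst l2_normsq_finite_support[of "Suc m"]) (auto simp: reflect_def lessThan_Suc_atMost atLeast0AtMost)
  also have "\<dots> = (\<Sum>k=0..m. (cmod (a (m - (m + 0 - k))))\<^sup>2)"
    by (rule sum.atLeastAtMost_rev)
  finally show ?thesis by (simp add: atLeast0AtMost)
qed

locale isometric_coeffs =
  fixes c :: "nat \<Rightarrow> complex"
  assumes l2_coeffs: "c \<in> l2"
    and autocorrelation: "\<And>d. (\<Sum>k. c k * cnj (c (k + d))) = (if d = 0 then 1 else 0)"
begin

lemma l2_shift_seq: "shift_seq i c \<in> l2"
proof -
  have "(\<lambda>k. (cmod (shift_seq i c (k + i)))\<^sup>2) sums l2_normsq c"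
    using l2_normsq_sums[OF l2_coeffs] by (simp add: shift_seq_def)
  then show ?thesis
    unfolding l2_def by (subst (asm) sums_zero_iff_shift) (auto simp: shift_seq_def sums_iff)
qed

lemma l2_inner_shift_seq_le:
  assumes "i \<le> j"
  shows "l2_inner (shift_seq i c) (shift_seq j c) = (if i = j then 1 else 0)"
proof -
  define e where "e = j - i"
  have "summable (\<lambda>l. c l * cnj (c (l + e)))"
    using l2_coeffs summable_ignore_initial_segment[of "\<lambda>k. (cmod (c k))\<^sup>2" e]
    by (intro summable_l2_inner) (auto simp: l2_def)
  moreover have "(\<lambda>k. c (k + e) * cnj (c k)) sums l2_inner (shift_seq i c) (shift_seq j c)"
  proof -
    have "(\<lambda>k. shift_seq i c k * cnj (shift_seq j c k)) sums l2_inner (shift_seq i c) (shift_seq j c)"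
      unfolding l2_inner_def by (intro summable_sums summable_l2_inner l2_shift_seq)
    then show ?thesis
      using assms by (subst (asm) sums_zero_iff_shift[of j, symmetric])
                     (auto simp: shift_seq_def e_def add.commute)
  qed
  ultimately have "l2_inner (shift_seq i c) (shift_seq j c) = cnj (\<Sum>k. c k * cnj (c (k + e)))"
    by (simp add: sums_iff suminf_cnj mult.commute)
  also have "\<dots> = cnj (if e = 0 then 1 else 0)" by (simp only: autocorrelation)
  finally show ?thesis using assms by (simp add: e_def)
qed

lemma l2_inner_shift_seq: "l2_inner (shift_seq i c) (shift_seq j c) = (if i = j then 1 else 0)"
proof (cases "i \<le> j")
  case False
  then show ?thesis
    using l2_inner_commute[OF l2_shift_seq l2_shift_seq, of j i] l2_inner_shift_seq_le[of j i] by simp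
qed (rule l2_inner_shift_seq_le)

sublocale shifts: l2_orthonormal UNIV "\<lambda>i. shift_seq i c"
  by unfold_locales (simp_all add: l2_shift_seq l2_inner_shift_seq)

lemma seq_conv_eq_combination:
  assumes "\<And>k. k \<ge> N \<Longrightarrow> a k = 0"
  shows "seq_conv a c = (\<lambda>k. \<Sum>i\<in>{..<N}. a i * shift_seq i c k)"
proof
  show "seq_conv a c k = (\<Sum>i\<in>{..<N}. a i * shift_seq i c k)" for k
    by (rule seq_conv_finite_support) (rule assms)
qed

lemma l2_seq_conv_finite_support:
  assumes "\<And>k. k \<ge> N \<Longrightarrow> a k = 0"
  shows "seq_conv a c \<in> l2"
proof -
  have "seq_conv a c = (\<lambda>k. \<Sum>i\<in>{..<N}. a i * shift_seq i c k)"
    by (rule seq_conv_eq_combination) (rule assms)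
  then show ?thesis by (simp add: shifts.l2_combination)
qed

lemma l2_normsq_seq_conv_finite_support:
  assumes "\<And>k. k \<ge> N \<Longrightarrow> a k = 0"
  shows "l2_normsq (seq_conv a c) = l2_normsq a"
proof -
  have "seq_conv a c = (\<lambda>k. \<Sum>i\<in>{..<N}. a i * shift_seq i c k)"
    by (rule seq_conv_eq_combination) (rule assms)
  then show ?thesis by (simp add: shifts.l2_normsq_combination l2_normsq_finite_support[of N] assms)
qed

lemma sum_norm_sq_seq_conv_le: "(\<Sum>k<N. (cmod (seq_conv a c k))\<^sup>2) \<le> (\<Sum>k<N. (cmod (a k))\<^sup>2)"
proof -
  have "(\<Sum>k<N. (cmod (seq_conv a c k))\<^sup>2) = (\<Sum>k<N. (cmod (seq_conv (truncate N a) c k))\<^sup>2)"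
    by (simp add: seq_conv_truncate)
  also have "\<dots> \<le> l2_normsq (seq_conv (truncate N a) c)"
    by (intro sum_le_l2_normsq l2_seq_conv_finite_support[of N]) (auto simp: truncate_def)
  also have "\<dots> = l2_normsq (truncate N a)"
    by (rule l2_normsq_seq_conv_finite_support[of N]) (simp add: truncate_def)
  also have "\<dots> = (\<Sum>k<N. (cmod (a k))\<^sup>2)"
    by (subst l2_normsq_finite_support[of N]) (auto simp: truncate_def)
  finally show ?thesis .
qed

lemma
  assumes "a \<in> l2"
  shows l2_seq_conv: "seq_conv a c \<in> l2"
    and l2_normsq_seq_conv_le: "l2_normsq (seq_conv a c) \<le> l2_normsq a"
proof -
  have "(\<Sum>k<N. (cmod (seq_conv a c k))\<^sup>2) \<le> l2_normsq a" for N
    using sum_norm_sq_seq_conv_le[of a N] sum_le_l2_normsq[OF assms, of "{..<N}"] by simp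
  then show "seq_conv a c \<in> l2" "l2_normsq (seq_conv a c) \<le> l2_normsq a"
    by (auto intro: l2_normsq_le)
qed

lemma l2_normsq_seq_conv:
  assumes a: "a \<in> l2"
  shows "l2_normsq (seq_conv a c) = l2_normsq a"
proof -
  have "l2_normsq (\<lambda>k. seq_conv (truncate M a) c k - seq_conv a c k) \<le> l2_normsq (\<lambda>k. truncate M a k - a k)" for M
    using l2_normsq_seq_conv_le[OF l2_diff[OF l2_truncate[of M a] a]] by (simp add: seq_conv_diff)
  then have "(\<lambda>M. l2_normsq (\<lambda>k. seq_conv (truncate M a) c k - seq_conv a c k)) \<longlonglongrightarrow> 0"
    by (intro tendsto_sandwich[OF always_eventually always_eventually tendsto_const
          tendsto_l2_normsq_truncate[OF a]] allI l2_normsq_nonneg l2_diff l2_seq_conv l2_truncate a)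
  then have "(\<lambda>M. l2_normsq (seq_conv (truncate M a) c)) \<longlonglongrightarrow> l2_normsq (seq_conv a c)"
    by (intro tendsto_l2_normsq l2_seq_conv l2_truncate a)
  moreover have "(\<lambda>M. l2_normsq (truncate M a)) \<longlonglongrightarrow> l2_normsq a"
    by (intro tendsto_l2_normsq l2_truncate a tendsto_l2_normsq_truncate)
  moreover have "l2_normsq (seq_conv (truncate M a) c) = l2_normsq (truncate M a)" for M
    by (rule l2_normsq_seq_conv_finite_support[of M]) (simp add: truncate_def)
  ultimately show ?thesis using LIMSEQ_unique by auto
qed

text \<open>Polarization: the real part of an inner product is determined by norms, and the imaginary
  part is the real part of the inner product with \<open>\<i> b\<close>.\<close>

lemma l2_inner_seq_conv:
  assumes a: "a \<in> l2" and b: "b \<in> l2"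
  shows "l2_inner (seq_conv a c) (seq_conv b c) = l2_inner a b"
proof -
  have Re_eq: "Re (l2_inner (seq_conv x c) (seq_conv y c)) = Re (l2_inner x y)" if "x \<in> l2" "y \<in> l2" for x y
  proof -
    have "l2_normsq (\<lambda>k. seq_conv x c k - seq_conv y c k) = l2_normsq (\<lambda>k. x k - y k)"
      using l2_normsq_seq_conv[OF l2_diff[OF that]] by (simp add: seq_conv_diff)
    then show ?thesis
      using l2_normsq_diff[OF l2_seq_conv l2_seq_conv, OF that] l2_normsq_diff[OF that]
      by (simp add: l2_normsq_seq_conv that)
  qed
  have ib: "(\<lambda>k. \<i> * b k) \<in> l2" by (rule l2_cmult[OF b])
  have "Re (l2_inner (seq_conv a c) (\<lambda>k. \<i> * seq_conv b c k)) = Re (l2_inner a (\<lambda>k. \<i> * b k))"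
    using Re_eq[OF a ib] by (simp add: seq_conv_cmult)
  then have "Im (l2_inner (seq_conv a c) (seq_conv b c)) = Im (l2_inner a b)"
    by (simp add: l2_inner_cmult_right l2_seq_conv a b)
  with Re_eq[OF a b] show ?thesis by (simp add: complex_eq_iff)
qed

text \<open>The component of \<open>reflect m a\<close> orthogonal to the range of \<open>x \<mapsto> seq_conv x c\<close>:
  by \<open>l2_inner_reflect_seq_conv\<close> the adjoint of that isometry maps \<open>reflect m a\<close> to
  \<open>reflect m (seq_conv a c)\<close>.\<close>

definition reflect_compl :: "nat \<Rightarrow> (nat \<Rightarrow> complex) \<Rightarrow> nat \<Rightarrow> complex" where
  "reflect_compl m a k = reflect m a k - seq_conv (reflect m (seq_conv a c)) c k"

lemma l2_reflect_compl: "reflect_compl m a \<in> l2"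
  unfolding reflect_compl_def by (intro l2_diff l2_reflect l2_seq_conv)

lemma l2_inner_reflect_compl_seq_conv:
  assumes "h \<in> l2"
  shows "l2_inner (reflect_compl m a) (seq_conv h c) = 0"
  using assms unfolding reflect_compl_def
  by (simp add: l2_inner_diff_left l2_reflect l2_seq_conv l2_inner_reflect_seq_conv l2_inner_seq_conv)

lemma l2_normsq_reflect_compl:
  "l2_normsq (reflect_compl m a) = (\<Sum>k\<le>m. (cmod (a k))\<^sup>2) - (\<Sum>k\<le>m. (cmod (seq_conv a c k))\<^sup>2)"
proof -
  let ?p = "reflect m a" and ?u = "reflect m (seq_conv a c)"
  have "l2_normsq (reflect_compl m a) = l2_normsq ?p + l2_normsq (seq_conv ?u c) - 2 * Re (l2_inner ?p (seq_conv ?u c))"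
    unfolding reflect_compl_def by (rule l2_normsq_diff[OF l2_reflect l2_seq_conv[OF l2_reflect]])
  also have "\<dots> = l2_normsq ?p - l2_normsq ?u"
    by (simp add: l2_normsq_seq_conv l2_reflect l2_inner_reflect_seq_conv l2_inner_self)
  finally show ?thesis by (simp add: l2_normsq_reflect)
qed

end

section \<open>Parseval's identity for an orthonormal basis\<close>

lemma countable_finite_exhaustion:
  assumes "countable J"
  obtains F :: "nat \<Rightarrow> 'a set"
  where "\<And>N. finite (F N)" "incseq F" "\<And>N. F N \<subseteq> J" "\<And>x. x \<in> J \<Longrightarrow> \<exists>N. x \<in> F N"
proof (cases "J = {}")
  case True
  then show ?thesis by (intro that[of "\<lambda>N. {}"]) (auto simp: incseq_def)
next
  case False
  show ?thesis
  proof (rule that[of "\<lambda>N. from_nat_into J ` {..<N}"])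
    show "from_nat_into J ` {..<N} \<subseteq> J" for N using from_nat_into[OF False] by auto
    show "\<exists>N. x \<in> from_nat_into J ` {..<N}" if "x \<in> J" for x
      using that assms by (intro exI[of _ "Suc (to_nat_on J x)"]) (auto intro!: image_eqI[of _ _ "to_nat_on J x"])
  qed (auto simp: incseq_def)
qed

lemma nn_integral_count_space_exhaustion:
  fixes f :: "'a \<Rightarrow> ennreal"
  assumes fin: "\<And>N. finite (F N)" and inc: "incseq F" and sub: "\<And>N. F N \<subseteq> J"
    and cover: "\<And>x. x \<in> J \<Longrightarrow> \<exists>N. x \<in> F N"
  shows "(\<integral>\<^sup>+ x. f x \<partial>count_space J) = (SUP N. \<Sum>x\<in>F N. f x)"
proof -
  have "f x * indicator J x = (SUP N. f x * indicator (F N) x)" for x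
  proof (cases "x \<in> J")
    case True
    then obtain N0 where "x \<in> F N0" using cover by blast
    then show ?thesis
      using True sub by (intro antisym SUP_upper2[of N0] SUP_least) (auto simp: indicator_def)
  next
    case False
    then have "x \<notin> F N" for N using sub by auto
    with False show ?thesis by simp
  qed
  then have "(\<integral>\<^sup>+ x. f x \<partial>count_space J) = (\<integral>\<^sup>+ x. (SUP N. f x * indicator (F N) x) \<partial>count_space UNIV)"
    by (simp add: nn_integral_count_space_indicator)
  also have "\<dots> = (SUP N. \<integral>\<^sup>+ x. f x * indicator (F N) x \<partial>count_space UNIV)"
    using inc by (intro nn_integral_monotone_convergence_SUP)
                 (auto simp: incseq_def le_fun_def indicator_def subset_iff intro!: mult_left_mono)
  also have "\<dots> = (SUP N. \<Sum>x\<in>F N. f x)"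
    by (simp add: nn_integral_count_space_indicator[symmetric] nn_integral_count_space_finite fin)
  finally show ?thesis .
qed

context l2_orthonormal
begin

definition residual :: "(nat \<Rightarrow> complex) \<Rightarrow> 'i set \<Rightarrow> nat \<Rightarrow> complex" where
  "residual q D k = q k - (\<Sum>n\<in>D. l2_inner q (G n) * G n k)"

lemma l2_residual: "q \<in> l2 \<Longrightarrow> finite D \<Longrightarrow> D \<subseteq> I \<Longrightarrow> residual q D \<in> l2"
  unfolding residual_def by (intro l2_diff l2_combination)

lemma l2_normsq_residual:
  assumes q: "q \<in> l2" and D: "finite D" "D \<subseteq> I"
  shows "l2_normsq (residual q D) = l2_normsq q - (\<Sum>n\<in>D. (cmod (l2_inner q (G n)))\<^sup>2)"
proof -
  let ?S = "\<lambda>k. \<Sum>n\<in>D. l2_inner q (G n) * G n k"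
  have "l2_inner ?S q = (\<Sum>n\<in>D. l2_inner (\<lambda>k. l2_inner q (G n) * G n k) q)"
    using D by (intro l2_inner_sum_left l2_cmult l2_member q) auto
  also have "\<dots> = (\<Sum>n\<in>D. l2_inner q (G n) * cnj (l2_inner q (G n)))"
    using D q by (intro sum.cong refl) (auto simp: l2_inner_cmult_left l2_member l2_inner_commute[OF q])
  also have "\<dots> = of_real (\<Sum>n\<in>D. (cmod (l2_inner q (G n)))\<^sup>2)"
    by (simp only: of_real_sum complex_norm_square)
  finally have "l2_inner q ?S = of_real (\<Sum>n\<in>D. (cmod (l2_inner q (G n)))\<^sup>2)"
    using l2_inner_commute[OF l2_combination[OF D] q] by simp
  then show ?thesis
    using l2_normsq_diff[OF q l2_combination[OF D]] l2_normsq_combination[OF D]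
    unfolding residual_def by simp
qed

lemma bessel_inequality:
  assumes "q \<in> l2" "finite D" "D \<subseteq> I"
  shows "(\<Sum>n\<in>D. (cmod (l2_inner q (G n)))\<^sup>2) \<le> l2_normsq q"
  using l2_normsq_residual[OF assms] l2_normsq_nonneg[OF l2_residual[OF assms]] by simp

lemma l2_normsq_residual_diff:
  assumes "finite D'" "D \<subseteq> D'" "D' \<subseteq> I"
  shows "l2_normsq (\<lambda>k. residual q D k - residual q D' k) = (\<Sum>n\<in>D' - D. (cmod (l2_inner q (G n)))\<^sup>2)"
proof -
  have "(\<lambda>k. residual q D k - residual q D' k) = (\<lambda>k. \<Sum>n\<in>D' - D. l2_inner q (G n) * G n k)"
    using assms by (auto simp: residual_def fun_eq_iff sum_diff finite_subset)
  moreover have "finite (D' - D)" "D' - D \<subseteq> I" using assms by auto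
  ultimately show ?thesis by (simp add: l2_normsq_combination)
qed

lemma l2_inner_residual_member:
  assumes "q \<in> l2" "finite D" "D \<subseteq> I" "m \<in> I"
  shows "l2_inner (residual q D) (G m) = (if m \<in> D then 0 else l2_inner q (G m))"
  using assms unfolding residual_def
  by (subst l2_inner_diff_left) (auto intro: l2_combination l2_member simp: l2_inner_combination_member)

lemma l2_inner_residual_orthogonal:
  assumes "q \<in> l2" "finite D" "D \<subseteq> I" "v \<in> l2"
    and "l2_inner q v = 0" "\<And>n. n \<in> D \<Longrightarrow> l2_inner (G n) v = 0"
  shows "l2_inner (residual q D) v = 0"
proof -
  have "l2_inner (\<lambda>k. \<Sum>n\<in>D. l2_inner q (G n) * G n k) v
        = (\<Sum>n\<in>D. l2_inner (\<lambda>k. l2_inner q (G n) * G n k) v)"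
    using assms by (intro l2_inner_sum_left l2_cmult l2_member) auto
  also have "\<dots> = 0"
    using assms by (intro sum.neutral ballI) (auto simp: l2_inner_cmult_left l2_member)
  finally show ?thesis
    using assms unfolding residual_def by (subst l2_inner_diff_left) (auto intro: l2_combination)
qed

lemma residual_limit:
  assumes q: "q \<in> l2" and F: "\<And>N. finite (F N)" "incseq F" "\<And>N. F N \<subseteq> I"
  obtains z where "z \<in> l2" "(\<lambda>N. l2_normsq (\<lambda>k. residual q (F N) k - z k)) \<longlonglongrightarrow> 0"
proof -
  define P where "P N = (\<Sum>n\<in>F N. (cmod (l2_inner q (G n)))\<^sup>2)" for N
  have diff: "l2_normsq (\<lambda>k. residual q (F N) k - residual q (F N') k) = \<bar>P N - P N'\<bar>" for N N'
  proof -
    have "l2_normsq (\<lambda>k. residual q (F N) k - residual q (F N') k) = P N' - P N" if "N \<le> N'" for N N'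
      using F \<open>incseq F\<close>[THEN monoD, OF that] unfolding P_def
      by (simp add: l2_normsq_residual_diff sum_diff)
    moreover have "l2_normsq (\<lambda>k. residual q (F N) k - residual q (F N') k)
                   = l2_normsq (\<lambda>k. residual q (F N') k - residual q (F N) k)"
      unfolding l2_normsq_def by (simp add: norm_minus_commute)
    moreover have "P N \<le> P N'" if "N \<le> N'" for N N'
      unfolding P_def using F \<open>incseq F\<close>[THEN monoD, OF that] by (intro sum_mono2) auto
    ultimately show ?thesis by (cases "N \<le> N'") auto
  qed
  have "incseq P" using F by (auto simp: incseq_def P_def intro!: sum_mono2)
  moreover have "P N \<le> l2_normsq q" for N unfolding P_def by (intro bessel_inequality q F)
  ultimately have "P \<longlonglongrightarrow> (SUP N. P N)"
    by (intro LIMSEQ_incseq_SUP bdd_aboveI[of _ "l2_normsq q"]) auto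
  then have "Cauchy P" by (rule LIMSEQ_imp_Cauchy)
  then have "\<exists>M. \<forall>N\<ge>M. \<forall>N'\<ge>M. l2_normsq (\<lambda>k. residual q (F N) k - residual q (F N') k) < e"
    if "e > 0" for e
    using that unfolding diff Cauchy_def dist_real_def by blast
  with l2_complete[of "\<lambda>N. residual q (F N)"] l2_residual[OF q F(1,3)] that show ?thesis by blast
qed

lemma eventually_l2_inner_residual_member:
  assumes q: "q \<in> l2" and F: "\<And>N. finite (F N)" "incseq F" "\<And>N. F N \<subseteq> I"
    and cover: "\<And>n. n \<in> I \<Longrightarrow> l2_inner q (G n) \<noteq> 0 \<Longrightarrow> \<exists>N. n \<in> F N" and m: "m \<in> I"
  shows "eventually (\<lambda>N. l2_inner (residual q (F N)) (G m) = 0) sequentially"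
proof (cases "l2_inner q (G m) = 0")
  case False
  then obtain N0 where "m \<in> F N0" using cover m by blast
  then have "m \<in> F N" if "N \<ge> N0" for N using \<open>incseq F\<close> that by (auto simp: incseq_def)
  then show ?thesis
    unfolding eventually_sequentially using q F m by (auto simp: l2_inner_residual_member)
qed (use q F m in \<open>simp add: l2_inner_residual_member\<close>)

lemma tendsto_bessel_sum:
  assumes q: "q \<in> l2" and V: "V \<subseteq> l2"
    and q_orthogonal: "\<And>v. v \<in> V \<Longrightarrow> l2_inner q v = 0"
    and G_orthogonal: "\<And>n v. n \<in> I \<Longrightarrow> v \<in> V \<Longrightarrow> l2_inner (G n) v = 0"
    and complete: "\<And>z. z \<in> l2 \<Longrightarrow> (\<And>v. v \<in> V \<Longrightarrow> l2_inner z v = 0) \<Longrightarrow>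
                     (\<And>n. n \<in> I \<Longrightarrow> l2_inner z (G n) = 0) \<Longrightarrow> z = (\<lambda>k. 0)"
    and F: "\<And>N. finite (F N)" "incseq F" "\<And>N. F N \<subseteq> I"
    and cover: "\<And>n. n \<in> I \<Longrightarrow> l2_inner q (G n) \<noteq> 0 \<Longrightarrow> \<exists>N. n \<in> F N"
  shows "(\<lambda>N. \<Sum>n\<in>F N. (cmod (l2_inner q (G n)))\<^sup>2) \<longlonglongrightarrow> l2_normsq q"
proof -
  obtain z where z: "z \<in> l2" and lim: "(\<lambda>N. l2_normsq (\<lambda>k. residual q (F N) k - z k)) \<longlonglongrightarrow> 0"
    using residual_limit[OF q F] .
  note res = l2_residual[OF q F(1,3)]
  have "l2_inner z (G m) = 0" if m: "m \<in> I" for m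
  proof -
    have "eventually (\<lambda>N. l2_inner (residual q (F N)) (G m) = 0) sequentially"
      by (rule eventually_l2_inner_residual_member[OF q F cover m])
    then have "(\<lambda>N. l2_inner (residual q (F N)) (G m)) \<longlonglongrightarrow> 0"
      by (rule tendsto_eventually)
    moreover have "(\<lambda>N. l2_inner (residual q (F N)) (G m)) \<longlonglongrightarrow> l2_inner z (G m)"
      by (intro tendsto_l2_inner_left res z l2_member m lim)
    ultimately show ?thesis using LIMSEQ_unique by blast
  qed
  moreover have "l2_inner z v = 0" if v: "v \<in> V" for v
  proof -
    have "(\<lambda>N. l2_inner (residual q (F N)) v) \<longlonglongrightarrow> l2_inner z v"
      using V v by (intro tendsto_l2_inner_left res z lim) auto
    moreover have "l2_inner (residual q (F N)) v = 0" for N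
      using F V v by (intro l2_inner_residual_orthogonal q q_orthogonal G_orthogonal) auto
    ultimately have "(\<lambda>N. 0) \<longlonglongrightarrow> l2_inner z v" by simp
    then show ?thesis by (simp add: LIMSEQ_const_iff)
  qed
  ultimately have "z = (\<lambda>k. 0)" by (intro complete z) auto
  then have "(\<lambda>N. l2_normsq q - (l2_normsq q - (\<Sum>n\<in>F N. (cmod (l2_inner q (G n)))\<^sup>2))) \<longlonglongrightarrow> l2_normsq q - 0"
    using lim by (intro tendsto_intros) (simp add: l2_normsq_residual q F)
  then show ?thesis by simp
qed

text \<open>Completeness of \<open>G\<close> is only required inside the orthogonal complement of \<open>V\<close>, to which
  \<open>q\<close> and all \<open>G n\<close> belong.\<close>

lemma nn_integral_parseval:
  assumes q: "q \<in> l2" and V: "V \<subseteq> l2"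
    and q_orthogonal: "\<And>v. v \<in> V \<Longrightarrow> l2_inner q v = 0"
    and G_orthogonal: "\<And>n v. n \<in> I \<Longrightarrow> v \<in> V \<Longrightarrow> l2_inner (G n) v = 0"
    and complete: "\<And>z. z \<in> l2 \<Longrightarrow> (\<And>v. v \<in> V \<Longrightarrow> l2_inner z v = 0) \<Longrightarrow>
                     (\<And>n. n \<in> I \<Longrightarrow> l2_inner z (G n) = 0) \<Longrightarrow> z = (\<lambda>k. 0)"
  shows "(\<integral>\<^sup>+ n. ennreal ((cmod (l2_inner q (G n)))\<^sup>2) \<partial>count_space I) = ennreal (l2_normsq q)"
proof -
  define J where "J = {n \<in> I. (cmod (l2_inner q (G n)))\<^sup>2 \<noteq> 0}"
  have "(\<lambda>n. (cmod (l2_inner q (G n)))\<^sup>2) summable_on I"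
    using bessel_inequality[OF q]
    by (intro nonneg_bdd_above_summable_on bdd_aboveI[of _ "l2_normsq q"]) auto
  then have "countable J" unfolding J_def by (rule summable_countable_real)
  then obtain F where F: "\<And>N. finite (F N)" "incseq F" "\<And>N. F N \<subseteq> J"
    and cover: "\<And>n. n \<in> J \<Longrightarrow> \<exists>N. n \<in> F N"
    using countable_finite_exhaustion by metis
  have FI: "F N \<subseteq> I" for N using F(3) unfolding J_def by blast
  have "(\<lambda>N. \<Sum>n\<in>F N. (cmod (l2_inner q (G n)))\<^sup>2) \<longlonglongrightarrow> l2_normsq q"
    by (rule tendsto_bessel_sum[OF q V q_orthogonal G_orthogonal complete F(1,2) FI])
       (auto simp: J_def intro: cover)
  then have "(\<lambda>N. \<Sum>n\<in>F N. ennreal ((cmod (l2_inner q (G n)))\<^sup>2)) \<longlonglongrightarrow> ennreal (l2_normsq q)"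
    by (simp add: tendsto_ennrealI)
  moreover have "(\<lambda>N. \<Sum>n\<in>F N. ennreal ((cmod (l2_inner q (G n)))\<^sup>2))
                 \<longlonglongrightarrow> (SUP N. \<Sum>n\<in>F N. ennreal ((cmod (l2_inner q (G n)))\<^sup>2))"
    using F by (intro LIMSEQ_SUP monoI sum_mono2) (auto simp: incseq_def)
  ultimately have "(SUP N. \<Sum>n\<in>F N. ennreal ((cmod (l2_inner q (G n)))\<^sup>2)) = ennreal (l2_normsq q)"
    using LIMSEQ_unique by blast
  moreover have "(\<integral>\<^sup>+ n. ennreal ((cmod (l2_inner q (G n)))\<^sup>2) \<partial>count_space I)
                 = (\<integral>\<^sup>+ n. ennreal ((cmod (l2_inner q (G n)))\<^sup>2) \<partial>count_space J)"
    by (rule nn_integral_count_space_eq) (auto simp: J_def)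
  ultimately show ?thesis using nn_integral_count_space_exhaustion[OF F cover] by simp
qed

end

lemma inner_function_holomorphic: "inner_function \<theta> \<Longrightarrow> \<theta> holomorphic_on ball 0 1"
  unfolding inner_function_def Hinf_def by blast

lemma inner_function_isometric_coeffs:
  assumes "inner_function \<theta>"
  shows "isometric_coeffs (taylor_coeff \<theta>)"
proof
  show "taylor_coeff \<theta> \<in> l2"
    using assms Hinf_subset_H2 by (auto simp: inner_function_def intro: taylor_coeff_H2)
qed (rule inner_function_autocorrelation[OF assms])

locale inner_model_basis =
  fixes \<theta> :: "complex \<Rightarrow> complex" and I :: "'i set" and g :: "'i \<Rightarrow> complex \<Rightarrow> complex"
  assumes inner: "inner_function \<theta>"
    and onb: "orthonormal_basis_of (model_space \<theta>) I g"
begin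

sublocale coeffs: isometric_coeffs "taylor_coeff \<theta>"
  by (rule inner_function_isometric_coeffs[OF inner])

lemma basis_H2: "n \<in> I \<Longrightarrow> g n \<in> H2"
  using onb unfolding orthonormal_basis_of_def model_space_def by auto

lemma basis_orthogonal:
  "n \<in> I \<Longrightarrow> h \<in> H2 \<Longrightarrow> l2_inner (taylor_coeff (g n)) (taylor_coeff (\<lambda>z. \<theta> z * h z)) = 0"
  using onb unfolding orthonormal_basis_of_def model_space_def H2_inner_eq_l2_inner by auto

sublocale basis: l2_orthonormal I "\<lambda>n. taylor_coeff (g n)"
  using onb by unfold_locales (auto simp: orthonormal_basis_of_def H2_inner_eq_l2_inner basis_H2 taylor_coeff_H2)

lemma taylor_coeff_inner_mult:
  "h \<in> H2 \<Longrightarrow> taylor_coeff (\<lambda>z. \<theta> z * h z) = seq_conv (taylor_coeff h) (taylor_coeff \<theta>)"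
  by (simp add: taylor_coeff_mult inner_function_holomorphic[OF inner] holomorphic_H2 seq_conv_commute)

lemma parseval_model_space:
  assumes q: "q \<in> l2" and orthogonal: "\<And>h. h \<in> H2 \<Longrightarrow> l2_inner q (taylor_coeff (\<lambda>z. \<theta> z * h z)) = 0"
  shows "(\<integral>\<^sup>+ n. ennreal ((cmod (l2_inner q (taylor_coeff (g n))))\<^sup>2) \<partial>count_space I) = ennreal (l2_normsq q)"
proof (rule basis.nn_integral_parseval[OF q, where V = "{taylor_coeff (\<lambda>z. \<theta> z * h z) | h. h \<in> H2}"])
  show "{taylor_coeff (\<lambda>z. \<theta> z * h z) | h. h \<in> H2} \<subseteq> l2"
    using coeffs.l2_seq_conv[OF taylor_coeff_H2] by (auto simp: taylor_coeff_inner_mult)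
  show "z = (\<lambda>k. 0)"
    if "z \<in> l2" "\<And>v. v \<in> {taylor_coeff (\<lambda>z. \<theta> z * h z) | h. h \<in> H2} \<Longrightarrow> l2_inner z v = 0"
       "\<And>n. n \<in> I \<Longrightarrow> l2_inner z (taylor_coeff (g n)) = 0" for z
  proof -
    have "fun_of_coeffs z \<in> model_space \<theta>"
      using that unfolding model_space_def H2_inner_eq_l2_inner
      by (auto simp: fun_of_coeffs_H2 taylor_coeff_fun_of_coeffs_l2)
    then show ?thesis
      using onb that unfolding orthonormal_basis_of_def H2_inner_eq_l2_inner
      by (auto simp: fun_of_coeffs_H2 taylor_coeff_fun_of_coeffs_l2 fun_eq_iff)
  qed
qed (use orthogonal basis_orthogonal in auto)

lemma nn_integral_coeff_mult_basis:
  assumes f: "f \<in> H2"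
  shows "(\<integral>\<^sup>+ n. ennreal ((cmod (taylor_coeff (\<lambda>z. f z * g n z) m))\<^sup>2) \<partial>count_space I)
         = ennreal ((\<Sum>k\<le>m. (cmod (taylor_coeff f k))\<^sup>2)
                    - (\<Sum>k\<le>m. (cmod (taylor_coeff (\<lambda>z. f z * \<theta> z) k))\<^sup>2))"
proof -
  define a where "a = taylor_coeff f"
  define q where "q = coeffs.reflect_compl m a"
  have hol: "f holomorphic_on ball 0 1" "\<theta> holomorphic_on ball 0 1"
    by (simp_all add: holomorphic_H2 f inner_function_holomorphic inner)
  have q: "q \<in> l2" unfolding q_def by (rule coeffs.l2_reflect_compl)
  have orthogonal: "l2_inner q (taylor_coeff (\<lambda>z. \<theta> z * h z)) = 0" if "h \<in> H2" for h
    unfolding q_def taylor_coeff_inner_mult[OF that]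
    by (intro coeffs.l2_inner_reflect_compl_seq_conv taylor_coeff_H2 that)
  have "cmod (taylor_coeff (\<lambda>z. f z * g n z) m) = cmod (l2_inner q (taylor_coeff (g n)))" if n: "n \<in> I" for n
  proof -
    let ?u = "reflect m (seq_conv a (taylor_coeff \<theta>))"
    have G: "taylor_coeff (g n) \<in> l2" by (intro taylor_coeff_H2 basis_H2 n)
    have u: "?u \<in> l2" "seq_conv ?u (taylor_coeff \<theta>) \<in> l2" by (simp_all add: l2_reflect coeffs.l2_seq_conv)
    have "l2_inner (taylor_coeff (g n)) (seq_conv ?u (taylor_coeff \<theta>)) = 0"
      using basis_orthogonal[OF n fun_of_coeffs_H2[OF u(1)]]
      by (simp add: taylor_coeff_inner_mult fun_of_coeffs_H2 taylor_coeff_fun_of_coeffs_l2 u)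
    then have "l2_inner q (taylor_coeff (g n)) = cnj (seq_conv a (taylor_coeff (g n)) m)"
      using l2_inner_commute[OF G u(2)] unfolding q_def coeffs.reflect_compl_def[abs_def]
      by (simp add: l2_inner_diff_left l2_reflect u G l2_inner_reflect)
    then show ?thesis by (simp add: a_def taylor_coeff_mult hol holomorphic_H2 basis_H2 n)
  qed
  then have "(\<integral>\<^sup>+ n. ennreal ((cmod (taylor_coeff (\<lambda>z. f z * g n z) m))\<^sup>2) \<partial>count_space I)
             = (\<integral>\<^sup>+ n. ennreal ((cmod (l2_inner q (taylor_coeff (g n))))\<^sup>2) \<partial>count_space I)"
    by (intro nn_integral_cong) simp
  then show ?thesis
    using parseval_model_space[OF q orthogonal]
    by (simp add: q_def coeffs.l2_normsq_reflect_compl a_def taylor_coeff_mult hol)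
qed

end

section \<open>Weighted norms\<close>

lemma suminf_ennreal_swap:
  fixes F :: "nat \<Rightarrow> nat \<Rightarrow> ennreal"
  shows "(\<Sum>k. \<Sum>j. F j k) = (\<Sum>j. \<Sum>k. F j k)"
proof -
  have "(\<Sum>k. \<Sum>j. F j k) = (\<integral>\<^sup>+ k. (\<Sum>j. F j k) \<partial>count_space UNIV)"
    by (rule nn_integral_count_space_nat[symmetric])
  also have "\<dots> = (\<Sum>j. \<integral>\<^sup>+ k. F j k \<partial>count_space UNIV)"
    by (rule nn_integral_suminf) simp
  finally show ?thesis by (simp add: nn_integral_count_space_nat)
qed

lemma suminf_ennreal_shift:
  fixes F :: "nat \<Rightarrow> ennreal"
  shows "(\<Sum>k. if j \<le> k then F k else 0) = (\<Sum>k. F (k + j))"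
proof -
  have "bij_betw (\<lambda>k. k + j) UNIV {j..}"
    by (rule bij_betw_byWitness[where f' = "\<lambda>k. k - j"]) auto
  then have "(\<Sum>k. F (k + j)) = (\<integral>\<^sup>+ k. F k \<partial>count_space {j..})"
    unfolding nn_integral_count_space_nat[symmetric] by (rule nn_integral_bij_count_space)
  also have "\<dots> = (\<integral>\<^sup>+ k. (if j \<le> k then F k else 0) \<partial>count_space UNIV)"
    by (subst nn_integral_count_space_indicator) (auto intro!: nn_integral_cong simp: indicator_def)
  also have "\<dots> = (\<Sum>k. if j \<le> k then F k else 0)"
    by (rule nn_integral_count_space_nat)
  finally show ?thesis ..
qed

lemma suminf_ennreal_tail_l2:
  assumes "a \<in> l2"
  shows "(\<Sum>k. ennreal ((cmod (a (Suc (k + j))))\<^sup>2)) = ennreal (l2_normsq a - (\<Sum>k\<le>j. (cmod (a k))\<^sup>2))"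
proof -
  have s: "summable (\<lambda>k. (cmod (a k))\<^sup>2)" using assms unfolding l2_def by simp
  have "(\<Sum>k. ennreal ((cmod (a (Suc (k + j))))\<^sup>2)) = ennreal (\<Sum>k. (cmod (a (k + Suc j)))\<^sup>2)"
    using summable_ignore_initial_segment[OF s, of "Suc j"] by (simp add: suminf_ennreal2)
  also have "(\<Sum>k. (cmod (a (k + Suc j)))\<^sup>2) = l2_normsq a - (\<Sum>k<Suc j. (cmod (a k))\<^sup>2)"
    unfolding l2_normsq_def by (rule suminf_minus_initial_segment[OF s])
  finally show ?thesis by (simp add: lessThan_Suc_atMost)
qed

text \<open>Summation by parts: writing \<open>w\<^sub>k\<close> as the sum of the increments \<open>v\<^sub>1, \<dots>, v\<^sub>k\<close> turns the
  weighted norm into a combination of tails of the coefficient sequence.\<close>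

lemma wnorm_sq_eq_tails:
  assumes v: "\<And>j. 0 \<le> v (Suc j)" and w: "\<And>k. w (Suc k) = (\<Sum>j\<le>k. v (Suc j))"
    and H: "taylor_coeff H \<in> l2"
  shows "wnorm_sq w H = (\<Sum>j. ennreal (v (Suc j))
           * ennreal (l2_normsq (taylor_coeff H) - (\<Sum>k\<le>j. (cmod (taylor_coeff H k))\<^sup>2)))"
proof -
  define x where "x k = (cmod (taylor_coeff H (Suc k)))\<^sup>2" for k
  have "ennreal (w (Suc k) * x k) = (\<Sum>j. if j \<le> k then ennreal (v (Suc j)) * ennreal (x k) else 0)" for k
  proof -
    have "ennreal (w (Suc k) * x k) = (\<Sum>j\<le>k. ennreal (v (Suc j)) * ennreal (x k))"
      unfolding w sum_distrib_right using v
      by (simp add: x_def sum_ennreal[symmetric] ennreal_mult)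
    also have "\<dots> = (\<Sum>j. if j \<le> k then ennreal (v (Suc j)) * ennreal (x k) else 0)"
      by (subst suminf_finite[of "{..k}"]) auto
    finally show ?thesis .
  qed
  then have "wnorm_sq w H = (\<Sum>k. \<Sum>j. if j \<le> k then ennreal (v (Suc j)) * ennreal (x k) else 0)"
    unfolding wnorm_sq_def x_def by simp
  also have "\<dots> = (\<Sum>j. ennreal (v (Suc j)) * (\<Sum>k. ennreal (x (k + j))))"
    by (simp add: suminf_ennreal_swap suminf_ennreal_shift)
  finally show ?thesis by (simp add: x_def suminf_ennreal_tail_l2[OF H])
qed

lemma weight_increments:
  fixes w :: "nat \<Rightarrow> real"
  assumes w_mono: "\<And>k. k \<ge> 1 \<Longrightarrow> w k \<le> w (Suc k)" and w1: "w 1 \<ge> 0"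
    and v_def: "\<And>k. v k = (if k \<le> 1 then w 1 else w k - w (k - 1))"
  shows "0 \<le> v (Suc j)" and "w (Suc k) = (\<Sum>j\<le>k. v (Suc j))"
proof -
  show "0 \<le> v (Suc j)"
  proof (cases j)
    case (Suc i)
    then show ?thesis using w_mono[of "Suc i"] by (simp add: v_def)
  qed (use w1 in \<open>simp add: v_def\<close>)
  show "w (Suc k) = (\<Sum>j\<le>k. v (Suc j))" by (induction k) (auto simp: v_def)
qed

context inner_model_basis
begin

lemma nn_integral_wnorm_sq_basis:
  assumes f: "f \<in> H2" and v: "\<And>j. 0 \<le> v (Suc j)"
  shows "(\<integral>\<^sup>+ n. wnorm_sq v (\<lambda>z. z * f z * g n z) \<partial>count_space I)
         = (\<Sum>j. ennreal (v (Suc j)) * ennreal ((\<Sum>k\<le>j. (cmod (taylor_coeff f k))\<^sup>2)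
                                              - (\<Sum>k\<le>j. (cmod (taylor_coeff (\<lambda>z. f z * \<theta> z) k))\<^sup>2)))"
proof -
  have "wnorm_sq v (\<lambda>z. z * f z * g n z)
        = (\<Sum>j. ennreal (v (Suc j)) * ennreal ((cmod (taylor_coeff (\<lambda>z. f z * g n z) j))\<^sup>2))" if "n \<in> I" for n
  proof -
    have "(\<lambda>z. f z * g n z) holomorphic_on ball 0 1"
      using that by (intro holomorphic_on_mult holomorphic_H2 f basis_H2)
    then show ?thesis
      unfolding wnorm_sq_def mult.assoc by (simp add: taylor_coeff_times_z ennreal_mult v)
  qed
  then have "(\<integral>\<^sup>+ n. wnorm_sq v (\<lambda>z. z * f z * g n z) \<partial>count_space I)
      = (\<integral>\<^sup>+ n. (\<Sum>j. ennreal (v (Suc j)) * ennreal ((cmod (taylor_coeff (\<lambda>z. f z * g n z) j))\<^sup>2))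
           \<partial>count_space I)"
    by (intro nn_integral_cong) simp
  also have "\<dots> = (\<Sum>j. \<integral>\<^sup>+ n. ennreal (v (Suc j)) * ennreal ((cmod (taylor_coeff (\<lambda>z. f z * g n z) j))\<^sup>2)
                      \<partial>count_space I)"
    by (rule nn_integral_suminf) simp
  also have "\<dots> = (\<Sum>j. ennreal (v (Suc j))
                   * (\<integral>\<^sup>+ n. ennreal ((cmod (taylor_coeff (\<lambda>z. f z * g n z) j))\<^sup>2) \<partial>count_space I))"
    by (simp add: nn_integral_cmult)
  finally show ?thesis by (simp add: nn_integral_coeff_mult_basis[OF f])
qed

end

theorem theorem3p4:
  fixes w :: "nat \<Rightarrow> real" and f \<theta> :: "complex \<Rightarrow> complex"
    and I :: "'i set" and g :: "'i \<Rightarrow> complex \<Rightarrow> complex"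
  assumes w_mono: "\<And>k. k \<ge> 1 \<Longrightarrow> w k \<le> w (Suc k)"
    and w1: "w 1 \<ge> 0"
    and f: "f \<in> H2"
    and inner: "inner_function \<theta>"
    and onb: "orthonormal_basis_of (model_space \<theta>) I g"
  shows "wnorm_sq w (\<lambda>z. f z * \<theta> z)
         = wnorm_sq w f
           + (\<integral>\<^sup>+ n. wnorm_sq (\<lambda>k. if k \<le> 1 then w 1 else w k - w (k - 1))
                                (\<lambda>z. z * f z * g n z) \<partial>count_space I)"
proof -
  interpret inner_model_basis \<theta> I g by unfold_locales (fact inner onb)+
  define v where "v k = (if k \<le> 1 then w 1 else w k - w (k - 1))" for k
  note v = weight_increments[of w v, OF w_mono w1 v_def]
  define a where "a = taylor_coeff f"
  define partial_f partial_f\<theta> where "partial_f j = (\<Sum>k\<le>j. (cmod (a k))\<^sup>2)"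
    and "partial_f\<theta> j = (\<Sum>k\<le>j. (cmod (taylor_coeff (\<lambda>z. f z * \<theta> z) k))\<^sup>2)" for j
  have a: "a \<in> l2" unfolding a_def by (rule taylor_coeff_H2[OF f])
  have f\<theta>: "taylor_coeff (\<lambda>z. f z * \<theta> z) = seq_conv a (taylor_coeff \<theta>)"
    unfolding a_def by (simp add: taylor_coeff_mult holomorphic_H2 f inner_function_holomorphic inner)
  have le: "partial_f\<theta> j \<le> partial_f j" "partial_f j \<le> l2_normsq a" for j
    using coeffs.sum_norm_sq_seq_conv_le[of a "Suc j"] sum_le_l2_normsq[OF a, of "{..j}"]
    unfolding partial_f_def partial_f\<theta>_def f\<theta> by (simp_all add: lessThan_Suc_atMost)
  have "wnorm_sq w (\<lambda>z. f z * \<theta> z) = (\<Sum>j. ennreal (v (Suc j)) * ennreal (l2_normsq a - partial_f\<theta> j))"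
    using wnorm_sq_eq_tails[OF v] coeffs.l2_seq_conv[OF a] coeffs.l2_normsq_seq_conv[OF a]
    by (simp add: f\<theta> partial_f\<theta>_def)
  also have "\<dots> = (\<Sum>j. ennreal (v (Suc j)) * ennreal (l2_normsq a - partial_f j)
                      + ennreal (v (Suc j)) * ennreal (partial_f j - partial_f\<theta> j))"
    using le by (simp add: distrib_left[symmetric] ennreal_plus[symmetric] del: ennreal_plus)
  also have "\<dots> = wnorm_sq w f + (\<integral>\<^sup>+ n. wnorm_sq v (\<lambda>z. z * f z * g n z) \<partial>count_space I)"
    using wnorm_sq_eq_tails[OF v a[unfolded a_def]] nn_integral_wnorm_sq_basis[of f v, OF f v(1)]
    by (simp add: suminf_add partial_f_def partial_f\<theta>_def a_def)
  finally show ?thesis unfolding v_def .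
qed

end
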